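(* Let $\mathcal F,\mathcal F'$ be $\rho$-flags on $V,V'$ with fixed adapted bases $(v_i),(v'_i)$. Define $F:U(M(\rho,k))\times{\rm Aut}_0(\mathcal C)\times\mathcal T\to{\rm Iso}_{alg}({\rm End}(\mathcal F),{\rm End}(\mathcal F'))$ by $F(A,g,(a_{ij}))=\varphi$, where $\varphi$ is the linear map with $\varphi(E_{ij})=F_{ij}$ for all $i\rho j$, with $F_{ij}$ constructed as follows: $(w_1,\dots,w_n)=(v'_1,\dots,v'_n)A^g$, $F_{ij}(w_j)=a_{ij}w_i$ and $F_{ij}(w_r)=0$ for $r\neq j$. Then $F$ is well defined (each such $\varphi$ is an algebra isomorphism ${\rm End}(\mathcal F)\to{\rm End}(\mathcal F')$) and $F$ is surjective: every algebra isomorphism ${\rm End}(\mathcal F)\to{\rm End}(\mathcal F')$ is of the form $F(A,g,(a_{ij})_{i\rho j})$.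
   Context: Let $k$ be a field, $n\ge 1$, $\rho$ a preorder on $\{1,\dots,n\}$, $M(\rho,k)$ the subalgebra of $M_n(k)$ of matrices with $(i,j)$-entry $0$ whenever $(i,j)\notin\rho$, and $U(M(\rho,k))$ its group of invertible elements. Write $i\sim j$ iff $i\rho j$ and $j\rho i$; $\mathcal C$ is the set of classes, $\hat i$ the class of $i$, ordered by $\hat i\le\hat j$ iff $i\rho j$; $m_\alpha=|\alpha|$. A $\rho$-flag $(V,(V_\alpha)_{\alpha\in\mathcal C})$ is an $n$-dimensional space with subspaces $V_\alpha$ admitting a basis $B=\bigcup_\alpha B_\alpha$ (disjoint) with $|B_\alpha|=m_\alpha$ and $\bigcup_{\beta\le\alpha}B_\beta$ a basis of $V_\alpha$; ${\rm End}(\mathcal F)$ is the algebra of linear $f:V\to V$ with $f(V_\alpha)\subseteq V_\alpha$. An adapted basis $(v_i)_{1\le i\le n}$ of $V$ is one with $\{v_i:\hat i\le\alpha\}$ a basis of $V_\alpha$ for all $\alpha$; for $i\rho j$, $E_{ij}(v_t)=\delta_{jt}v_i$. ${\rm Aut}_0(\mathcal C)$ is the group of poset automorphisms $g$ of $\mathcal C$ with $m_{g(\alpha)}=m_\alpha$ for all $\alpha$. For $g\in{\rm Aut}_0(\mathcal C)$, $\tilde g\in S_n$ is defined by: if $\alpha=\{i_1<\dots<i_r\}$ and $g(\alpha)=\{j_1<\dots<j_r\}$ then $\tilde g(i_s)=j_s$. For $A\in M_n(k)$, $A^g$ is the matrix whose $(i,j)$-entry is the $(i,\tilde g(j))$-entry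 of $A$. $\mathcal T$ is the set of families $(a_{ij})_{i\rho j}$ in $k^*$ with $a_{ij}a_{jr}=a_{ir}$ whenever $i\rho j$, $j\rho r$. $(w_1,\dots,w_n)=(v'_1,\dots,v'_n)M$ means $w_j=\sum_i M_{ij}v'_i$. *)

theory Defs
  imports Complex_Main
begin

text \<open>Indices are 1..n. Matrices are functions nat => nat => 'k, only entries in {1..n}^2 matter.\<close>

definition cls :: "(nat \<times> nat) set \<Rightarrow> nat \<Rightarrow> nat set" where
  "cls \<rho> i = {j. (i, j) \<in> \<rho> \<and> (j, i) \<in> \<rho>}"

definition classes :: "(nat \<times> nat) set \<Rightarrow> nat \<Rightarrow> nat set set" where
  "classes \<rho> n = cls \<rho> ` {1..n}"

definition cls_le :: "(nat \<times> nat) set \<Rightarrow> nat set \<Rightarrow> nat set \<Rightarrow> bool" where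
  "cls_le \<rho> \<alpha> \<beta> = (\<exists>i\<in>\<alpha>. \<exists>j\<in>\<beta>. (i, j) \<in> \<rho>)"

definition rho_mat :: "(nat \<times> nat) set \<Rightarrow> (nat \<Rightarrow> nat \<Rightarrow> 'k::field) set" where
  "rho_mat \<rho> = {A. \<forall>i j. (i, j) \<notin> \<rho> \<longrightarrow> A i j = 0}"

definition mat_mult :: "nat \<Rightarrow> (nat \<Rightarrow> nat \<Rightarrow> 'k::field) \<Rightarrow> (nat \<Rightarrow> nat \<Rightarrow> 'k) \<Rightarrow> (nat \<Rightarrow> nat \<Rightarrow> 'k)" where
  "mat_mult n A B = (\<lambda>i j. \<Sum>t = 1..n. A i t * B t j)"

definition mat_one :: "nat \<Rightarrow> (nat \<Rightarrow> nat \<Rightarrow> 'k::field)" where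
  "mat_one n = (\<lambda>i j. if i = j \<and> i \<in> {1..n} then 1 else 0)"

definition units_rho :: "(nat \<times> nat) set \<Rightarrow> nat \<Rightarrow> (nat \<Rightarrow> nat \<Rightarrow> 'k::field) set" where
  "units_rho \<rho> n = {A \<in> rho_mat \<rho>. \<exists>B \<in> rho_mat \<rho>.
       mat_mult n A B = mat_one n \<and> mat_mult n B A = mat_one n}"

text \<open>Aut_0(C): poset automorphisms of the classes preserving class sizes
  (only the values of g on classes matter).\<close>
definition Aut0 :: "(nat \<times> nat) set \<Rightarrow> nat \<Rightarrow> (nat set \<Rightarrow> nat set) set" where
  "Aut0 \<rho> n = {g. bij_betw g (classes \<rho> n) (classes \<rho> n)
      \<and> (\<forall>\<alpha>\<in>classes \<rho> n. \<forall>\<beta>\<in>classes \<rho> n. cls_le \<rho> \<alpha> \<beta> \<longleftrightarrow> cls_le \<rho> (g \<alpha>) (g \<beta>))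
      \<and> (\<forall>\<alpha>\<in>classes \<rho> n. card (g \<alpha>) = card \<alpha>)}"

text \<open>tilde g: the s-th smallest element of a class goes to the s-th smallest element of its image.\<close>
definition tilde :: "(nat \<times> nat) set \<Rightarrow> (nat set \<Rightarrow> nat set) \<Rightarrow> nat \<Rightarrow> nat" where
  "tilde \<rho> g i = (THE j. j \<in> g (cls \<rho> i) \<and>
      card {t \<in> g (cls \<rho> i). t < j} = card {t \<in> cls \<rho> i. t < i})"

definition mat_twist :: "(nat \<times> nat) set \<Rightarrow> (nat set \<Rightarrow> nat set) \<Rightarrow> (nat \<Rightarrow> nat \<Rightarrow> 'k) \<Rightarrow> (nat \<Rightarrow> nat \<Rightarrow> 'k)" where
  "mat_twist \<rho> g A = (\<lambda>i j. A i (tilde \<rho> g j))"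

definition Tfam :: "(nat \<times> nat) set \<Rightarrow> (nat \<Rightarrow> nat \<Rightarrow> 'k::field) set" where
  "Tfam \<rho> = {a. (\<forall>(i, j) \<in> \<rho>. a i j \<noteq> 0) \<and>
      (\<forall>i j r. (i, j) \<in> \<rho> \<longrightarrow> (j, r) \<in> \<rho> \<longrightarrow> a i j * a j r = a i r)}"

definition coord :: "('k::field \<Rightarrow> 'v::ab_group_add \<Rightarrow> 'v) \<Rightarrow> (nat \<Rightarrow> 'v) \<Rightarrow> nat \<Rightarrow> 'v \<Rightarrow> nat \<Rightarrow> 'k" where
  "coord s v n x i = module.representation s (v ` {1..n}) x (v i)"

text \<open>Adapted basis of a rho-flag (V, (V_alpha)): V is the whole type 'v.\<close>
definition adapted_basis :: "('k::field \<Rightarrow> 'v::ab_group_add \<Rightarrow> 'v) \<Rightarrow> (nat \<times> nat) set \<Rightarrow> nat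
    \<Rightarrow> (nat set \<Rightarrow> 'v set) \<Rightarrow> (nat \<Rightarrow> 'v) \<Rightarrow> bool" where
  "adapted_basis s \<rho> n Vf v \<longleftrightarrow> inj_on v {1..n} \<and> \<not> module.dependent s (v ` {1..n})
     \<and> module.span s (v ` {1..n}) = UNIV
     \<and> (\<forall>\<alpha> \<in> classes \<rho> n. module.subspace s (Vf \<alpha>)
          \<and> module.span s {v i | i. i \<in> {1..n} \<and> cls_le \<rho> (cls \<rho> i) \<alpha>} = Vf \<alpha>)"

definition End_flag :: "('k::field \<Rightarrow> 'v::ab_group_add \<Rightarrow> 'v) \<Rightarrow> (nat \<times> nat) set \<Rightarrow> nat
    \<Rightarrow> (nat set \<Rightarrow> 'v set) \<Rightarrow> ('v \<Rightarrow> 'v) set" where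
  "End_flag s \<rho> n Vf = {f. Vector_Spaces.linear s s f \<and> (\<forall>\<alpha> \<in> classes \<rho> n. f ` Vf \<alpha> \<subseteq> Vf \<alpha>)}"

definition alg_iso :: "('k::field \<Rightarrow> 'v::ab_group_add \<Rightarrow> 'v) \<Rightarrow> ('k \<Rightarrow> 'w::ab_group_add \<Rightarrow> 'w)
    \<Rightarrow> ('v \<Rightarrow> 'v) set \<Rightarrow> ('w \<Rightarrow> 'w) set \<Rightarrow> (('v \<Rightarrow> 'v) \<Rightarrow> ('w \<Rightarrow> 'w)) \<Rightarrow> bool" where
  "alg_iso s s' E E' \<phi> \<longleftrightarrow> bij_betw \<phi> E E'
     \<and> (\<forall>f \<in> E. \<forall>g \<in> E. \<phi> (\<lambda>x. f x + g x) = (\<lambda>x. \<phi> f x + \<phi> g x))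
     \<and> (\<forall>c. \<forall>f \<in> E. \<phi> (\<lambda>x. s c (f x)) = (\<lambda>x. s' c (\<phi> f x)))
     \<and> (\<forall>f \<in> E. \<forall>g \<in> E. \<phi> (f \<circ> g) = \<phi> f \<circ> \<phi> g)
     \<and> \<phi> id = id"

definition Emat :: "('k::field \<Rightarrow> 'v::ab_group_add \<Rightarrow> 'v) \<Rightarrow> (nat \<Rightarrow> 'v) \<Rightarrow> nat \<Rightarrow> nat \<Rightarrow> nat \<Rightarrow> 'v \<Rightarrow> 'v" where
  "Emat s v n i j = (\<lambda>x. s (coord s v n x j) (v i))"

definition wvec :: "('k::field \<Rightarrow> 'w::ab_group_add \<Rightarrow> 'w) \<Rightarrow> (nat \<Rightarrow> 'w) \<Rightarrow> nat \<Rightarrow> (nat \<Rightarrow> nat \<Rightarrow> 'k) \<Rightarrow> nat \<Rightarrow> 'w" where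
  "wvec s' v' n B j = (\<Sum>i = 1..n. s' (B i j) (v' i))"

definition Fmat :: "('k::field \<Rightarrow> 'w::ab_group_add \<Rightarrow> 'w) \<Rightarrow> (nat \<Rightarrow> 'w) \<Rightarrow> nat \<Rightarrow> (nat \<times> nat) set
    \<Rightarrow> (nat \<Rightarrow> nat \<Rightarrow> 'k) \<Rightarrow> (nat set \<Rightarrow> nat set) \<Rightarrow> (nat \<Rightarrow> nat \<Rightarrow> 'k) \<Rightarrow> nat \<Rightarrow> nat \<Rightarrow> 'w \<Rightarrow> 'w" where
  "Fmat s' v' n \<rho> A g a i j =
     (let w = wvec s' v' n (mat_twist \<rho> g A) in (\<lambda>x. s' (a i j * coord s' w n x j) (w i)))"

end

theory Submission
  imports Defs
begin

text \<open>
  In an adapted basis, the endomorphisms of a \<open>\<rho>\<close>-flag are exactly the linear maps whose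
  matrix vanishes outside \<open>\<rho>\<close>, so both algebras are copies of \<open>M(\<rho>,k)\<close>.

  Given \<open>(A, g, a)\<close>, the vectors \<open>w = v' A\<^sup>g\<close> form another adapted basis of the second flag,
  because \<open>A\<close> is a unit of \<open>M(\<rho>,k)\<close> and \<open>g\<close> permutes the indices compatibly with \<open>\<rho>\<close>.
  Transporting matrices from \<open>v\<close> to \<open>w\<close> and scaling the \<open>(i,j)\<close> entry by \<open>a\<^sub>i\<^sub>j\<close> is then
  an algebra isomorphism, the multiplicativity of \<open>a\<close> being exactly what is needed.

  Conversely, an isomorphism \<open>\<phi>\<close> sends the \<open>E\<^sub>i\<^sub>i\<close> to orthogonal idempotents of rank one
  summing to the identity. Vectors \<open>u\<^sub>i\<close> spanning their images form a basis in which
  \<open>\<phi>(E\<^sub>i\<^sub>j) = c\<^sub>i\<^sub>j E\<^sup>u\<^sub>i\<^sub>j\<close> for a multiplicative family \<open>c\<close>, and \<open>u\<close> and \<open>v'\<close> have the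
  same pattern algebra. Matching each \<open>u\<^sub>j\<close> with an index where both transition matrices are
  nonzero induces an order automorphism \<open>g\<close> of the classes; it preserves class sizes because
  the spans of corresponding down-sets have equal dimension. The transition matrix from
  \<open>v'\<close> to \<open>u\<close>, reindexed by \<open>g\<close>, is the required unit \<open>A\<close>.
\<close>

section \<open>Coordinates and matrices in an indexed basis\<close>

definition mat_of :: "('k::field \<Rightarrow> 'v::ab_group_add \<Rightarrow> 'v) \<Rightarrow> (nat \<Rightarrow> 'v) \<Rightarrow> nat \<Rightarrow> ('v \<Rightarrow> 'v) \<Rightarrow> nat \<Rightarrow> nat \<Rightarrow> 'k"
  where "mat_of s b n f i j = coord s b n (f (b j)) i"

definition map_of_mat :: "('k::field \<Rightarrow> 'v::ab_group_add \<Rightarrow> 'v) \<Rightarrow> (nat \<Rightarrow> 'v) \<Rightarrow> nat \<Rightarrow> (nat \<Rightarrow> nat \<Rightarrow> 'k) \<Rightarrow> 'v \<Rightarrow> 'v"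
  where "map_of_mat s b n X = (\<lambda>x. \<Sum>i=1..n. \<Sum>j=1..n. s (X i j * coord s b n x j) (b i))"

definition pattern_endos :: "('k::field \<Rightarrow> 'v::ab_group_add \<Rightarrow> 'v) \<Rightarrow> (nat \<times> nat) set \<Rightarrow> (nat \<Rightarrow> 'v) \<Rightarrow> nat \<Rightarrow> ('v \<Rightarrow> 'v) set"
  where "pattern_endos s \<rho> b n = {f. Vector_Spaces.linear s s f \<and> (\<forall>i\<in>{1..n}. \<forall>j\<in>{1..n}. (i, j) \<notin> \<rho> \<longrightarrow> mat_of s b n f i j = 0)}"

locale indexed_basis = vector_space s for s :: "'k::field \<Rightarrow> 'v::ab_group_add \<Rightarrow> 'v" (infixr "*s" 75) +
  fixes b :: "nat \<Rightarrow> 'v" and n :: nat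
  assumes b_inj: "inj_on b {1..n}"
    and b_indep: "independent (b ` {1..n})"
    and b_span: "span (b ` {1..n}) = UNIV"
begin

abbreviation crd where "crd x i \<equiv> coord s b n x i"

lemma crd_eq_representation: "crd x i = representation (b ` {1..n}) x (b i)"
  by (simp add: coord_def)

lemma crd_add: "crd (x + y) i = crd x i + crd y i"
  using representation_add[OF b_indep] b_span by (simp add: crd_eq_representation)

lemma crd_scale: "crd (c *s x) i = c * crd x i"
  using representation_scale[OF b_indep] b_span by (simp add: crd_eq_representation)

lemma crd_sum: "crd (sum f I) i = (\<Sum>j\<in>I. crd (f j) i)"
proof -
  have "\<And>j. f j \<in> span (b ` {1..n})" using b_span by simp
  from representation_sum[OF b_indep, where v=f and I=I, OF this] show ?thesis by (simp add: crd_eq_representation)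
qed

lemma crd_zero: "crd 0 i = 0"
  by (simp add: crd_eq_representation representation_zero)

lemma crd_basis: assumes i: "i \<in> {1..n}" and j: "j \<in> {1..n}" shows "crd (b j) i = (if i = j then 1 else 0)"
proof -
  have "representation (b ` {1..n}) (b j) = (\<lambda>v. if v = b j then 1 else 0)"
    by (rule representation_basis[OF b_indep imageI[OF j]])
  moreover have "(b i = b j) = (i = j)" by (rule inj_on_eq_iff[OF b_inj i j])
  ultimately show ?thesis by (simp add: crd_eq_representation)
qed

lemma basis_expansion: "x = (\<Sum>t=1..n. crd x t *s b t)"
proof -
  have "x = (\<Sum>y\<in>b ` {1..n}. representation (b ` {1..n}) x y *s y)"
    using sum_representation_eq[OF b_indep, of x "b ` {1..n}"] b_span by simp
  also have "\<dots> = (\<Sum>t=1..n. crd x t *s b t)"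
    by (rule sum.reindex_cong[OF b_inj]) (auto simp: crd_eq_representation)
  finally show ?thesis .
qed

lemma crd_lincomb: assumes i: "i \<in> {1..n}" shows "crd (\<Sum>t=1..n. c t *s b t) i = c i"
proof -
  have "crd (\<Sum>t=1..n. c t *s b t) i = (\<Sum>t=1..n. c t * crd (b t) i)" by (simp add: crd_sum crd_scale)
  also have "\<dots> = (\<Sum>t=1..n. if t = i then c i else 0)"
  proof (rule sum.cong)
    fix t assume t: "t \<in> {1..n}"
    show "c t * crd (b t) i = (if t = i then c i else 0)" using crd_basis[OF i t] by auto
  qed simp
  also have "\<dots> = c i" using i by simp
  finally show ?thesis .
qed

lemma crd_eqI: assumes "\<And>i. i \<in> {1..n} \<Longrightarrow> crd x i = crd y i" shows "x = y"
proof -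
  have "x = (\<Sum>t=1..n. crd x t *s b t)" by (rule basis_expansion)
  also have "\<dots> = (\<Sum>t=1..n. crd y t *s b t)" by (rule sum.cong) (simp_all add: assms)
  also have "\<dots> = y" by (rule basis_expansion[symmetric])
  finally show ?thesis .
qed

lemma basis_nonzero: assumes i: "i \<in> {1..n}" shows "b i \<noteq> 0"
proof
  assume "b i = 0"
  hence "0 \<in> b ` {1..n}" using imageI[OF i, of b] by simp
  thus False using b_indep dependent_zero by metis
qed

lemma in_span_basis_iff:
  assumes "T \<subseteq> {1..n}"
  shows "x \<in> span (b ` T) \<longleftrightarrow> (\<forall>i\<in>{1..n}. i \<notin> T \<longrightarrow> crd x i = 0)"
proof
  assume x: "x \<in> span (b ` T)"
  have eq: "representation (b ` {1..n}) x = representation (b ` T) x"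
    by (rule representation_extend[OF b_indep x]) (rule image_mono[OF assms])
  show "\<forall>i\<in>{1..n}. i \<notin> T \<longrightarrow> crd x i = 0"
  proof (intro ballI impI)
    fix i assume i: "i \<in> {1..n}" and iT: "i \<notin> T"
    have "b i \<notin> b ` T"
    proof
      assume "b i \<in> b ` T"
      then obtain t where t: "t \<in> T" "b i = b t" by blast
      have "t \<in> {1..n}" using t(1) assms by blast
      hence "i = t" using inj_on_eq_iff[OF b_inj i] t(2) by blast
      thus False using t(1) iT by simp
    qed
    hence "representation (b ` T) x (b i) = 0" by (meson representation_ne_zero)
    thus "crd x i = 0" using eq by (simp add: crd_eq_representation)
  qed
next
  assume h: "\<forall>i\<in>{1..n}. i \<notin> T \<longrightarrow> crd x i = 0"
  have "x = (\<Sum>t=1..n. crd x t *s b t)" by (rule basis_expansion)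
  also have "\<dots> \<in> span (b ` T)"
  proof (rule span_sum)
    fix t assume t: "t \<in> {1..n}"
    show "crd x t *s b t \<in> span (b ` T)"
    proof (cases "t \<in> T")
      case True thus ?thesis by (intro span_scale span_base imageI)
    next
      case False hence "crd x t = 0" using h t by blast
      thus ?thesis by (simp add: span_zero)
    qed
  qed
  finally show "x \<in> span (b ` T)" .
qed

abbreviation lin where "lin f \<equiv> Vector_Spaces.linear s s f"
abbreviation mat where "mat f i j \<equiv> mat_of s b n f i j"

lemma lin_iff_additive: "lin f \<longleftrightarrow> (\<forall>x y. f (x + y) = f x + f y) \<and> (\<forall>c x. f (c *s x) = c *s f x)"
  unfolding Vector_Spaces.linear_iff using vector_space_axioms by simp

lemma lin_map_zero: "lin f \<Longrightarrow> f 0 = 0"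
  by (metis lin_iff_additive scale_zero_left)

lemma lin_map_sum: assumes "lin f" shows "f (sum g A) = (\<Sum>a\<in>A. f (g a))"
proof (induction A rule: infinite_finite_induct)
  case (infinite A) then show ?case using lin_map_zero[OF assms] by simp
next
  case empty then show ?case using lin_map_zero[OF assms] by simp
next
  case (insert x F) then show ?case using assms by (simp add: lin_iff_additive)
qed

lemma lin_map_scale: "lin f \<Longrightarrow> f (c *s x) = c *s f x" by (simp add: lin_iff_additive)

lemma lin_add: "lin f \<Longrightarrow> lin h \<Longrightarrow> lin (\<lambda>x. f x + h x)"
  by (simp add: lin_iff_additive scale_right_distrib algebra_simps)
lemma lin_scale: "lin f \<Longrightarrow> lin (\<lambda>x. c *s f x)"
  by (simp add: lin_iff_additive scale_right_distrib mult.commute)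
lemma lin_comp: "lin f \<Longrightarrow> lin h \<Longrightarrow> lin (f \<circ> h)"
  by (simp add: lin_iff_additive)
lemma lin_id: "lin id" by (simp add: lin_iff_additive)
lemma lin_zero: "lin (\<lambda>x. 0)" by (simp add: lin_iff_additive)
lemma lin_rank_one: "lin (\<lambda>x. (c * crd x j) *s y)"
  by (simp add: lin_iff_additive crd_add crd_scale algebra_simps scale_left_distrib)

lemma crd_apply: assumes "lin f" shows "crd (f x) i = (\<Sum>t=1..n. crd x t * mat f i t)"
proof -
  have "f x = f (\<Sum>t=1..n. crd x t *s b t)" by (subst basis_expansion[of x]) (rule refl)
  also have "\<dots> = (\<Sum>t=1..n. crd x t *s f (b t))" by (simp add: lin_map_sum[OF assms] lin_map_scale[OF assms])
  finally show ?thesis by (simp add: crd_sum crd_scale mat_of_def)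
qed

lemma map_of_mat_basis: assumes j: "j \<in> {1..n}" shows "map_of_mat s b n X (b j) = (\<Sum>i=1..n. X i j *s b i)"
  unfolding map_of_mat_def
proof (rule sum.cong)
  fix i assume i: "i \<in> {1..n}"
  have "(\<Sum>t=1..n. (X i t * crd (b j) t) *s b i) = (\<Sum>t=1..n. if t = j then X i j *s b i else 0)"
  proof (rule sum.cong)
    fix t assume t: "t \<in> {1..n}"
    show "(X i t * crd (b j) t) *s b i = (if t = j then X i j *s b i else 0)" using crd_basis[OF t j] by auto
  qed simp
  also have "\<dots> = X i j *s b i" using j by simp
  finally show "(\<Sum>t=1..n. (X i t * crd (b j) t) *s b i) = X i j *s b i" .
qed simp

lemma mat_map_of_mat: assumes i: "i \<in> {1..n}" and j: "j \<in> {1..n}" shows "mat (map_of_mat s b n X) i j = X i j"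
  unfolding mat_of_def map_of_mat_basis[OF j] by (rule crd_lincomb[OF i])

lemma lin_map_of_mat: "lin (map_of_mat s b n X)"
proof -
  have 1: "map_of_mat s b n X (x + y) = map_of_mat s b n X x + map_of_mat s b n X y" for x y
    by (simp add: map_of_mat_def crd_add algebra_simps scale_left_distrib sum.distrib)
  have 2: "map_of_mat s b n X (c *s x) = c *s map_of_mat s b n X x" for c x
    by (simp add: map_of_mat_def crd_scale scale_sum_right mult.left_commute)
  show ?thesis using 1 2 by (simp add: lin_iff_additive)
qed

lemma mat_eqI: assumes "lin f" "lin h" "\<And>i j. i \<in> {1..n} \<Longrightarrow> j \<in> {1..n} \<Longrightarrow> mat f i j = mat h i j"
  shows "f = h"
proof
  fix x show "f x = h x"
  proof (rule crd_eqI)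
    fix i assume i: "i \<in> {1..n}"
    show "crd (f x) i = crd (h x) i"
      unfolding crd_apply[OF assms(1)] crd_apply[OF assms(2)]
      by (rule sum.cong) (simp_all add: assms(3)[OF i])
  qed
qed

lemma mat_add: "mat (\<lambda>x. f x + h x) i j = mat f i j + mat h i j"
  by (simp add: mat_of_def crd_add)
lemma mat_scale: "mat (\<lambda>x. c *s f x) i j = c * mat f i j"
  by (simp add: mat_of_def crd_scale)
lemma mat_comp: "lin f \<Longrightarrow> mat (f \<circ> h) i r = (\<Sum>t=1..n. mat f i t * mat h t r)"
  by (simp add: mat_of_def[of _ _ _ "f \<circ> h"] crd_apply mat_of_def[of _ _ _ h] mult.commute)
lemma mat_id: "i \<in> {1..n} \<Longrightarrow> j \<in> {1..n} \<Longrightarrow> mat id i j = (if i = j then 1 else 0)"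
  by (simp add: mat_of_def crd_basis)
lemma mat_zero: "mat (\<lambda>x. 0) i j = 0"
  by (simp add: mat_of_def crd_zero)
lemma Emat_apply: "Emat s b n i j = (\<lambda>x. crd x j *s b i)"
  by (simp add: Emat_def)
lemma lin_Emat: "lin (Emat s b n i j)"
  using lin_rank_one[of 1 j "b i"] by (simp add: Emat_apply)
lemma mat_Emat: "i \<in> {1..n} \<Longrightarrow> j \<in> {1..n} \<Longrightarrow> r \<in> {1..n} \<Longrightarrow> t \<in> {1..n} \<Longrightarrow>
   mat (Emat s b n i j) r t = (if r = i \<and> t = j then 1 else 0)"
  by (simp add: mat_of_def Emat_apply crd_scale crd_basis)

end

context
  fixes \<rho> :: "(nat \<times> nat) set" and n :: nat
  assumes P: "preorder_on {1..n} \<rho>"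
begin

lemma preorder_dom: "(i, j) \<in> \<rho> \<Longrightarrow> i \<in> {1..n} \<and> j \<in> {1..n}"
  using P unfolding preorder_on_def by blast

lemma preorder_refl: "i \<in> {1..n} \<Longrightarrow> (i, i) \<in> \<rho>"
  using P unfolding preorder_on_def refl_on_def by blast

lemma preorder_trans: "(i, j) \<in> \<rho> \<Longrightarrow> (j, k) \<in> \<rho> \<Longrightarrow> (i, k) \<in> \<rho>"
  using P unfolding preorder_on_def trans_def by blast

lemma cls_sub: "cls \<rho> i \<subseteq> {1..n}"
  unfolding cls_def using preorder_dom by blast

lemma cls_self: "i \<in> {1..n} \<Longrightarrow> i \<in> cls \<rho> i"
  unfolding cls_def using preorder_refl by blast

lemma cls_le_iff: assumes "i \<in> {1..n}" "j \<in> {1..n}"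
  shows "cls_le \<rho> (cls \<rho> i) (cls \<rho> j) \<longleftrightarrow> (i, j) \<in> \<rho>"
proof
  assume "cls_le \<rho> (cls \<rho> i) (cls \<rho> j)"
  then obtain i' j' where "i' \<in> cls \<rho> i" "j' \<in> cls \<rho> j" "(i', j') \<in> \<rho>"
    unfolding cls_le_def by blast
  thus "(i, j) \<in> \<rho>" unfolding cls_def using preorder_trans by blast
next
  assume "(i, j) \<in> \<rho>"
  thus "cls_le \<rho> (cls \<rho> i) (cls \<rho> j)" unfolding cls_le_def using cls_self assms by blast
qed

lemma cls_mem: "j \<in> cls \<rho> i \<Longrightarrow> cls \<rho> j = cls \<rho> i"
  unfolding cls_def using preorder_trans by blast

lemma cls_eq_iff: assumes "i \<in> {1..n}" "j \<in> {1..n}"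
  shows "cls \<rho> i = cls \<rho> j \<longleftrightarrow> (i, j) \<in> \<rho> \<and> (j, i) \<in> \<rho>"
proof
  assume "cls \<rho> i = cls \<rho> j"
  hence "j \<in> cls \<rho> i" using cls_self[OF assms(2)] by simp
  thus "(i, j) \<in> \<rho> \<and> (j, i) \<in> \<rho>" unfolding cls_def by blast
next
  assume "(i, j) \<in> \<rho> \<and> (j, i) \<in> \<rho>"
  hence "j \<in> cls \<rho> i" unfolding cls_def by blast
  thus "cls \<rho> i = cls \<rho> j" using cls_mem by metis
qed

lemma classes_cls: "\<alpha> \<in> classes \<rho> n \<Longrightarrow> \<exists>i\<in>{1..n}. \<alpha> = cls \<rho> i"
  unfolding classes_def by blast

lemma cls_in_classes: "i \<in> {1..n} \<Longrightarrow> cls \<rho> i \<in> classes \<rho> n"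
  unfolding classes_def by blast

end

section \<open>Pattern endomorphisms\<close>

context indexed_basis
begin

lemma pattern_endos_linear: "f \<in> pattern_endos s \<rho> b n \<Longrightarrow> lin f" by (simp add: pattern_endos_def)

lemma pattern_endos_entry: "f \<in> pattern_endos s \<rho> b n \<Longrightarrow> i \<in> {1..n} \<Longrightarrow> j \<in> {1..n} \<Longrightarrow> (i, j) \<notin> \<rho> \<Longrightarrow> mat f i j = 0"
  by (simp add: pattern_endos_def)

lemma zero_in_pattern_endos: "(\<lambda>x. 0) \<in> pattern_endos s \<rho> b n"
  by (simp add: pattern_endos_def lin_zero mat_zero)

lemma add_in_pattern_endos: "f \<in> pattern_endos s \<rho> b n \<Longrightarrow> h \<in> pattern_endos s \<rho> b n \<Longrightarrow> (\<lambda>x. f x + h x) \<in> pattern_endos s \<rho> b n"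
  by (simp add: pattern_endos_def lin_add mat_add)

lemma scale_in_pattern_endos: "f \<in> pattern_endos s \<rho> b n \<Longrightarrow> (\<lambda>x. c *s f x) \<in> pattern_endos s \<rho> b n"
  by (simp add: pattern_endos_def lin_scale mat_scale)

lemma comp_in_pattern_endos: assumes P: "preorder_on {1..n} \<rho>" and f: "f \<in> pattern_endos s \<rho> b n" and h: "h \<in> pattern_endos s \<rho> b n"
  shows "f \<circ> h \<in> pattern_endos s \<rho> b n"
  unfolding pattern_endos_def
proof (intro CollectI conjI ballI impI)
  show "lin (f \<circ> h)" using lin_comp pattern_endos_linear f h by blast
  fix i r assume i: "i \<in> {1..n}" and r: "r \<in> {1..n}" and ir: "(i, r) \<notin> \<rho>"
  have "mat (f \<circ> h) i r = (\<Sum>t=1..n. mat f i t * mat h t r)" by (rule mat_comp[OF pattern_endos_linear[OF f]])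
  also have "\<dots> = (\<Sum>t=1..n. 0)"
  proof (rule sum.cong)
    fix t assume t: "t \<in> {1..n}"
    show "mat f i t * mat h t r = 0"
    proof (cases "(i, t) \<in> \<rho>")
      case True
      hence "(t, r) \<notin> \<rho>" using ir preorder_trans[OF P] by blast
      thus ?thesis using pattern_endos_entry[OF h t r] by simp
    next
      case False thus ?thesis using pattern_endos_entry[OF f i t] by simp
    qed
  qed simp
  finally show "mat (f \<circ> h) i r = 0" by simp
qed

lemma Emat_in_pattern_endos: assumes "(i, j) \<in> \<rho>" "preorder_on {1..n} \<rho>"
  shows "Emat s b n i j \<in> pattern_endos s \<rho> b n"
  unfolding pattern_endos_def
proof (intro CollectI conjI ballI impI)
  show "lin (Emat s b n i j)" by (rule lin_Emat)
  have ij: "i \<in> {1..n}" "j \<in> {1..n}" using preorder_dom[OF assms(2) assms(1)] by auto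
  fix r t assume r: "r \<in> {1..n}" and t: "t \<in> {1..n}" and rt: "(r, t) \<notin> \<rho>"
  hence "\<not> (r = i \<and> t = j)" using assms(1) by blast
  thus "mat (Emat s b n i j) r t = 0" using mat_Emat[OF ij r t] by simp
qed

lemma Emat_comp: assumes "i \<in> {1..n}" "j \<in> {1..n}" "k \<in> {1..n}" "r \<in> {1..n}"
  shows "Emat s b n i j \<circ> Emat s b n k r = (if j = k then Emat s b n i r else (\<lambda>x. 0))"
  using assms by (auto simp: Emat_apply crd_scale crd_basis fun_eq_iff)

lemma scale_sum_swap: "(\<Sum>j\<in>J. c j *s (\<Sum>i\<in>I. P i j *s w i)) = (\<Sum>i\<in>I. (\<Sum>j\<in>J. c j * P i j) *s w i)"
proof -
  have "(\<Sum>j\<in>J. c j *s (\<Sum>i\<in>I. P i j *s w i)) = (\<Sum>j\<in>J. \<Sum>i\<in>I. (c j * P i j) *s w i)"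
    by (simp add: scale_sum_right)
  also have "\<dots> = (\<Sum>i\<in>I. \<Sum>j\<in>J. (c j * P i j) *s w i)" by (rule sum.swap)
  also have "\<dots> = (\<Sum>i\<in>I. (\<Sum>j\<in>J. c j * P i j) *s w i)" by (simp add: scale_sum_left)
  finally show ?thesis .
qed

lemma basis_eq_inverse_lincomb:
  assumes PQ: "\<And>i r. i \<in> {1..n} \<Longrightarrow> r \<in> {1..n} \<Longrightarrow> (\<Sum>t=1..n. P i t * Q t r) = (if i = r then 1 else 0)"
    and r: "r \<in> {1..n}"
  shows "b r = (\<Sum>j=1..n. Q j r *s (\<Sum>i=1..n. P i j *s b i))"
proof -
  have "(\<Sum>j=1..n. Q j r *s (\<Sum>i=1..n. P i j *s b i)) = (\<Sum>i=1..n. (\<Sum>j=1..n. Q j r * P i j) *s b i)"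
    by (rule scale_sum_swap)
  also have "\<dots> = (\<Sum>i=1..n. if i = r then b i else 0)"
    by (rule sum.cong) (use PQ[OF _ r] in \<open>simp_all add: mult.commute\<close>)
  also have "\<dots> = b r" using r by simp
  finally show ?thesis by simp
qed


end

section \<open>Flag endomorphisms are the pattern endomorphisms\<close>

context indexed_basis
begin

lemma pattern_endos_preserves_down_span:
  assumes P: "preorder_on {1..n} \<rho>" and f: "f \<in> pattern_endos s \<rho> b n"
  shows "f ` span (b ` {t\<in>{1..n}. (t, j) \<in> \<rho>}) \<subseteq> span (b ` {t\<in>{1..n}. (t, j) \<in> \<rho>})"
proof clarify
  let ?D = "{t\<in>{1..n}. (t, j) \<in> \<rho>}"
  fix x assume x: "x \<in> span (b ` ?D)"
  have "crd (f x) i = 0" if i: "i \<in> {1..n}" and iD: "i \<notin> ?D" for i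
  proof -
    have "crd x t * mat f i t = 0" if t: "t \<in> {1..n}" for t
    proof (cases "t \<in> ?D")
      case True
      hence "(i, t) \<notin> \<rho>" using iD i preorder_trans[OF P] by blast
      thus ?thesis using pattern_endos_entry[OF f i t] by simp
    next
      case False
      have "?D \<subseteq> {1..n}" by blast
      thus ?thesis using iffD1[OF in_span_basis_iff[OF \<open>?D \<subseteq> {1..n}\<close>] x] t False by simp
    qed
    thus ?thesis unfolding crd_apply[OF pattern_endos_linear[OF f]] by (rule sum.neutral[OF ballI])
  qed
  moreover have "?D \<subseteq> {1..n}" by blast
  ultimately show "f x \<in> span (b ` ?D)" using in_span_basis_iff by blast
qed

lemma in_pattern_endos_if_preserves_down_spans:
  assumes "lin f" and down: "\<And>j. j \<in> {1..n} \<Longrightarrow> f (b j) \<in> span (b ` {t\<in>{1..n}. (t, j) \<in> \<rho>})"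
  shows "f \<in> pattern_endos s \<rho> b n"
  unfolding pattern_endos_def
proof (intro CollectI conjI ballI impI assms(1))
  fix i j assume "i \<in> {1..n}" "j \<in> {1..n}" "(i, j) \<notin> \<rho>"
  moreover have "{t\<in>{1..n}. (t, j) \<in> \<rho>} \<subseteq> {1..n}" by blast
  ultimately show "mat f i j = 0"
    using iffD1[OF in_span_basis_iff down] unfolding mat_of_def by blast
qed

end

lemma End_flag_eq_pattern_endos:
  assumes V: "indexed_basis s v n" and P: "preorder_on {1..n} \<rho>" and ad: "adapted_basis s \<rho> n Vf v"
  shows "End_flag s \<rho> n Vf = pattern_endos s \<rho> v n"
proof -
  interpret V: indexed_basis s v n by (rule V)
  have Vf: "Vf (cls \<rho> j) = V.span (v ` {t\<in>{1..n}. (t, j) \<in> \<rho>})" if j: "j \<in> {1..n}" for j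
  proof -
    have "{v i | i. i \<in> {1..n} \<and> cls_le \<rho> (cls \<rho> i) (cls \<rho> j)} = v ` {t\<in>{1..n}. (t, j) \<in> \<rho>}"
      using cls_le_iff[OF P _ j] by blast
    moreover have "V.span {v i | i. i \<in> {1..n} \<and> cls_le \<rho> (cls \<rho> i) (cls \<rho> j)} = Vf (cls \<rho> j)"
      using ad cls_in_classes[OF P j] unfolding adapted_basis_def by blast
    ultimately show ?thesis by simp
  qed
  show ?thesis
  proof (intro set_eqI iffI)
    fix f assume f: "f \<in> End_flag s \<rho> n Vf"
    show "f \<in> pattern_endos s \<rho> v n"
    proof (rule V.in_pattern_endos_if_preserves_down_spans)
      show "V.lin f" using f unfolding End_flag_def by blast
      fix j assume j: "j \<in> {1..n}"
      have "v j \<in> Vf (cls \<rho> j)" using Vf[OF j] j preorder_refl[OF P j] by (auto intro: V.span_base)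
      moreover have "f ` Vf (cls \<rho> j) \<subseteq> Vf (cls \<rho> j)"
        using f cls_in_classes[OF P j] unfolding End_flag_def by blast
      ultimately show "f (v j) \<in> V.span (v ` {t\<in>{1..n}. (t, j) \<in> \<rho>})" using Vf[OF j] by blast
    qed
  next
    fix f assume f: "f \<in> pattern_endos s \<rho> v n"
    show "f \<in> End_flag s \<rho> n Vf" unfolding End_flag_def
    proof (intro CollectI conjI ballI V.pattern_endos_linear[OF f])
      fix \<alpha> assume "\<alpha> \<in> classes \<rho> n"
      then obtain j where "j \<in> {1..n}" "\<alpha> = cls \<rho> j" using classes_cls[OF P] by blast
      thus "f ` Vf \<alpha> \<subseteq> Vf \<alpha>" using V.pattern_endos_preserves_down_span[OF P f] Vf by simp
    qed
  qed
qed

section \<open>Change of basis\<close>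

lemma (in vector_space) independent_if_lincomb_zero:
  fixes n :: nat and w :: "nat \<Rightarrow> 'b"
  assumes h: "\<And>c. (\<Sum>j=1..n. c j *s w j) = 0 \<Longrightarrow> \<forall>j\<in>{1..n}. c j = 0"
  shows "inj_on w {1..n} \<and> independent (w ` {1..n})"
proof
  show inj: "inj_on w {1..n}"
  proof (rule inj_onI, rule ccontr)
    fix i j assume i: "i \<in> {1..n}" and j: "j \<in> {1..n}" and eq: "w i = w j" and ne: "i \<noteq> j"
    define c where "c t = (if t = i then 1 else if t = j then -1 else (0::'a))" for t
    have "(\<Sum>t=1..n. c t *s w t) = (\<Sum>t=1..n. (if t = i then w t else 0) - (if t = j then w t else 0))"
      by (rule sum.cong) (auto simp: c_def ne)
    also have "\<dots> = w i - w j"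
    proof -
      have d1: "(\<Sum>t=1..n. if t = i then w t else 0) = w i" using i by simp
      have d2: "(\<Sum>t=1..n. if t = j then w t else 0) = w j" using j by simp
      show ?thesis unfolding sum_subtractf d1 d2 by (rule refl)
    qed
    also have "\<dots> = 0" using eq by simp
    finally have "\<forall>t\<in>{1..n}. c t = 0" by (rule h)
    hence "c i = 0" using i by blast
    thus False by (simp add: c_def)
  qed
  show "independent (w ` {1..n})"
  proof
    assume "dependent (w ` {1..n})"
    then obtain u where u: "\<exists>x\<in>w ` {1..n}. u x \<noteq> 0" "(\<Sum>x\<in>w ` {1..n}. u x *s x) = 0"
      using dependent_finite[of "w ` {1..n}"] by blast
    have "(\<Sum>x\<in>w ` {1..n}. u x *s x) = (\<Sum>t=1..n. u (w t) *s w t)"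
      by (rule sum.reindex_cong[OF inj refl]) simp
    hence "(\<Sum>t=1..n. u (w t) *s w t) = 0" using u(2) by simp
    hence "\<forall>t\<in>{1..n}. u (w t) = 0" by (rule h)
    thus False using u(1) by blast
  qed
qed

lemma kernel_zero_of_left_inverse:
  fixes P Q :: "nat \<Rightarrow> nat \<Rightarrow> 'a::comm_ring_1"
  assumes QP: "\<And>i r. i \<in> {1..n} \<Longrightarrow> r \<in> {1..n} \<Longrightarrow> (\<Sum>t=1..n. Q i t * P t r) = (if i = r then 1 else 0)"
    and zero: "\<And>i. i \<in> {1..n} \<Longrightarrow> (\<Sum>j=1..n. c j * P i j) = 0"
    and k: "k \<in> {1..n}"
  shows "c k = 0"
proof -
  have "c k = (\<Sum>j=1..n. if j = k then c j else 0)" using k by simp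
  also have "\<dots> = (\<Sum>j=1..n. (\<Sum>i=1..n. Q k i * P i j) * c j)"
    by (rule sum.cong) (use QP[OF k] in auto)
  also have "\<dots> = (\<Sum>j=1..n. \<Sum>i=1..n. Q k i * P i j * c j)"
    by (simp add: sum_distrib_right)
  also have "\<dots> = (\<Sum>i=1..n. \<Sum>j=1..n. Q k i * P i j * c j)" by (rule sum.swap)
  also have "\<dots> = (\<Sum>i=1..n. Q k i * (\<Sum>j=1..n. c j * P i j))" by (simp add: sum_distrib_left mult_ac)
  also have "\<dots> = 0" using zero by (intro sum.neutral ballI) (metis mult_zero_right)
  finally show ?thesis .
qed

lemma indexed_basis_change:
  fixes s :: "'k::field \<Rightarrow> 'v::ab_group_add \<Rightarrow> 'v"
  assumes nbb: "indexed_basis s b n"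
    and PQ: "\<And>i r. i \<in> {1..n} \<Longrightarrow> r \<in> {1..n} \<Longrightarrow> (\<Sum>t=1..n. P i t * Q t r) = (if i = r then 1 else 0)"
    and QP: "\<And>i r. i \<in> {1..n} \<Longrightarrow> r \<in> {1..n} \<Longrightarrow> (\<Sum>t=1..n. Q i t * P t r) = (if i = r then 1 else 0)"
    and w: "w = (\<lambda>j. \<Sum>i=1..n. s (P i j) (b i))"
  shows "indexed_basis s w n" "\<And>i j. i \<in> {1..n} \<Longrightarrow> j \<in> {1..n} \<Longrightarrow> coord s b n (w j) i = P i j"
    "\<And>r j. r \<in> {1..n} \<Longrightarrow> j \<in> {1..n} \<Longrightarrow> coord s w n (b r) j = Q j r"
proof -
  interpret B: indexed_basis s b n by (rule nbb)
  show co: "\<And>i j. i \<in> {1..n} \<Longrightarrow> j \<in> {1..n} \<Longrightarrow> coord s b n (w j) i = P i j"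
    unfolding w by (rule B.crd_lincomb)
  have lc: "\<forall>j\<in>{1..n}. c j = 0" if z: "(\<Sum>j=1..n. s (c j) (w j)) = 0" for c
  proof
    fix k assume k: "k \<in> {1..n}"
    have e: "(\<Sum>j=1..n. s (c j) (w j)) = (\<Sum>i=1..n. s (\<Sum>j=1..n. c j * P i j) (b i))"
      unfolding w by (rule B.scale_sum_swap)
    have "(\<Sum>j=1..n. c j * P i j) = 0" if i: "i \<in> {1..n}" for i
      using B.crd_lincomb[OF i, of "\<lambda>i. \<Sum>j=1..n. c j * P i j"] z e B.crd_zero by simp
    thus "c k = 0" using kernel_zero_of_left_inverse[of n Q P c k] QP k by blast
  qed
  have ii: "inj_on w {1..n} \<and> B.independent (w ` {1..n})"
    by (rule B.independent_if_lincomb_zero) (rule lc)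
  have br: "b r = (\<Sum>j=1..n. s (Q j r) (w j))" if r: "r \<in> {1..n}" for r
    unfolding w by (rule B.basis_eq_inverse_lincomb[OF PQ r])
  have sp: "B.span (w ` {1..n}) = UNIV"
  proof -
    have "b ` {1..n} \<subseteq> B.span (w ` {1..n})"
    proof
      fix x assume "x \<in> b ` {1..n}"
      then obtain r where r: "r \<in> {1..n}" "x = b r" by blast
      show "x \<in> B.span (w ` {1..n})" unfolding r(2) br[OF r(1)]
        by (intro B.span_sum B.span_scale B.span_base imageI)
    qed
    hence "B.span (b ` {1..n}) \<subseteq> B.span (w ` {1..n})" using B.span_mono B.span_span by metis
    thus ?thesis using B.b_span by blast
  qed
  show nbw: "indexed_basis s w n" by (unfold_locales) (use ii sp in auto)
  interpret W: indexed_basis s w n by (rule nbw)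
  show "\<And>r j. r \<in> {1..n} \<Longrightarrow> j \<in> {1..n} \<Longrightarrow> coord s w n (b r) j = Q j r"
    using br W.crd_lincomb by simp
qed

lemma crd_change_basis:
  assumes nb1: "indexed_basis s b1 n" and nb2: "indexed_basis s b2 n"
  shows "coord s b2 n x i = (\<Sum>a=1..n. coord s b1 n x a * coord s b2 n (b1 a) i)"
proof -
  interpret B1: indexed_basis s b1 n by (rule nb1)
  interpret B2: indexed_basis s b2 n by (rule nb2)
  have "coord s b2 n x i = coord s b2 n (\<Sum>a=1..n. s (coord s b1 n x a) (b1 a)) i"
    by (subst B1.basis_expansion[of x]) (rule refl)
  also have "\<dots> = (\<Sum>a=1..n. coord s b1 n x a * coord s b2 n (b1 a) i)"
    by (simp add: B2.crd_sum B2.crd_scale)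
  finally show ?thesis .
qed

lemma crd_transition_inverse:
  assumes B1: "indexed_basis s b1 n" and B2: "indexed_basis s b2 n" and i: "i \<in> {1..n}"
  shows "(\<Sum>j=1..n. coord s b2 n (b1 i) j * coord s b1 n (b2 j) i) = 1"
  using crd_change_basis[OF B2 B1, of "b1 i" i] indexed_basis.crd_basis[OF B1 i i] by simp

lemma pattern_endos_subset:
  assumes nb1: "indexed_basis s b1 n" and nb2: "indexed_basis s b2 n" and P: "preorder_on {1..n} \<rho>"
    and h: "h \<in> pattern_endos s \<rho> b1 n"
    and c1: "\<And>i j. i \<in> {1..n} \<Longrightarrow> j \<in> {1..n} \<Longrightarrow> coord s b1 n (b2 j) i \<noteq> 0 \<Longrightarrow> (i, \<tau> j) \<in> \<rho>"
    and c2: "\<And>i j. i \<in> {1..n} \<Longrightarrow> j \<in> {1..n} \<Longrightarrow> coord s b2 n (b1 i) j \<noteq> 0 \<Longrightarrow> (\<tau> j, i) \<in> \<rho>"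
    and rf: "\<And>i j. i \<in> {1..n} \<Longrightarrow> j \<in> {1..n} \<Longrightarrow> (\<tau> i, \<tau> j) \<in> \<rho> \<Longrightarrow> (i, j) \<in> \<rho>"
  shows "h \<in> pattern_endos s \<rho> b2 n"
proof -
  interpret B1: indexed_basis s b1 n by (rule nb1)
  interpret B2: indexed_basis s b2 n by (rule nb2)
  have lh: "B1.lin h" using h by (rule B1.pattern_endos_linear)
  show ?thesis unfolding pattern_endos_def
  proof (intro CollectI conjI ballI impI lh)
    fix i j assume i: "i \<in> {1..n}" and j: "j \<in> {1..n}" and ij: "(i, j) \<notin> \<rho>"
    have term_zero: "coord s b1 n (b2 j) c * mat_of s b1 n h a c * coord s b2 n (b1 a) i = 0"
      if a: "a \<in> {1..n}" and c: "c \<in> {1..n}" for a c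
    proof (cases "coord s b1 n (b2 j) c = 0 \<or> coord s b2 n (b1 a) i = 0")
      case False
      hence "(\<tau> i, a) \<in> \<rho>" "(c, \<tau> j) \<in> \<rho>" using c1[OF c j] c2[OF a i] by auto
      hence "(a, c) \<notin> \<rho>" using ij rf[OF i j] preorder_trans[OF P] by blast
      thus ?thesis using B1.pattern_endos_entry[OF h a c] by simp
    qed auto
    have "mat_of s b2 n h i j = (\<Sum>a=1..n. coord s b1 n (h (b2 j)) a * coord s b2 n (b1 a) i)"
      unfolding mat_of_def by (rule crd_change_basis[OF nb1 nb2])
    also have "\<dots> = (\<Sum>a=1..n. \<Sum>c=1..n. coord s b1 n (b2 j) c * mat_of s b1 n h a c * coord s b2 n (b1 a) i)"
      by (simp add: B1.crd_apply[OF lh] sum_distrib_right)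
    also have "\<dots> = 0" by (intro sum.neutral ballI) (simp add: term_zero)
    finally show "mat_of s b2 n h i j = 0" by simp
  qed
qed

lemma pattern_endos_eq:
  assumes nb1: "indexed_basis s b1 n" and nb2: "indexed_basis s b2 n" and P: "preorder_on {1..n} \<rho>"
    and bij: "bij_betw \<tau> {1..n} {1..n}"
    and tiff: "\<And>i j. i \<in> {1..n} \<Longrightarrow> j \<in> {1..n} \<Longrightarrow> (\<tau> i, \<tau> j) \<in> \<rho> \<longleftrightarrow> (i, j) \<in> \<rho>"
    and c1: "\<And>i j. i \<in> {1..n} \<Longrightarrow> j \<in> {1..n} \<Longrightarrow> coord s b1 n (b2 j) i \<noteq> 0 \<Longrightarrow> (i, \<tau> j) \<in> \<rho>"
    and c2: "\<And>i j. i \<in> {1..n} \<Longrightarrow> j \<in> {1..n} \<Longrightarrow> coord s b2 n (b1 i) j \<noteq> 0 \<Longrightarrow> (\<tau> j, i) \<in> \<rho>"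
  shows "pattern_endos s \<rho> b1 n = pattern_endos s \<rho> b2 n"
proof (intro set_eqI iffI)
  fix h assume h: "h \<in> pattern_endos s \<rho> b1 n"
  show "h \<in> pattern_endos s \<rho> b2 n"
  proof (rule pattern_endos_subset[OF nb1 nb2 P h c1 c2])
    fix i j assume i: "i \<in> {1..n}" and j: "j \<in> {1..n}" and r: "(\<tau> i, \<tau> j) \<in> \<rho>"
    show "(i, j) \<in> \<rho>" using tiff[OF i j] r by blast
  qed
next
  fix h assume h: "h \<in> pattern_endos s \<rho> b2 n"
  define \<tau>' where "\<tau>' = inv_into {1..n} \<tau>"
  have im: "\<tau> ` {1..n} = {1..n}" using bij by (simp add: bij_betw_def)
  have jim: "j \<in> \<tau> ` {1..n}" if "j \<in> {1..n}" for j using im that by simp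
  have t1: "\<tau>' j \<in> {1..n}" if "j \<in> {1..n}" for j
    unfolding \<tau>'_def by (rule inv_into_into[OF jim[OF that]])
  have t2: "\<tau> (\<tau>' j) = j" if "j \<in> {1..n}" for j
    unfolding \<tau>'_def by (rule f_inv_into_f[OF jim[OF that]])
  show "h \<in> pattern_endos s \<rho> b1 n"
  proof (rule pattern_endos_subset[OF nb2 nb1 P h, of \<tau>'])
    fix i j assume i: "i \<in> {1..n}" and j: "j \<in> {1..n}" and ne: "coord s b2 n (b1 j) i \<noteq> 0"
    have "(\<tau> i, j) \<in> \<rho>" by (rule c2[OF j i ne])
    hence "(\<tau> i, \<tau> (\<tau>' j)) \<in> \<rho>" using t2[OF j] by simp
    thus "(i, \<tau>' j) \<in> \<rho>" using tiff[OF i t1[OF j]] by blast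
  next
    fix i j assume i: "i \<in> {1..n}" and j: "j \<in> {1..n}" and ne: "coord s b1 n (b2 i) j \<noteq> 0"
    have "(j, \<tau> i) \<in> \<rho>" by (rule c1[OF j i ne])
    hence "(\<tau> (\<tau>' j), \<tau> i) \<in> \<rho>" using t2[OF j] by simp
    thus "(\<tau>' j, i) \<in> \<rho>" using tiff[OF t1[OF j] i] by blast
  next
    fix i j assume i: "i \<in> {1..n}" and j: "j \<in> {1..n}" and r: "(\<tau>' i, \<tau>' j) \<in> \<rho>"
    hence "(\<tau> (\<tau>' i), \<tau> (\<tau>' j)) \<in> \<rho>" using tiff[OF t1[OF i] t1[OF j]] by blast
    thus "(i, j) \<in> \<rho>" using t2[OF i] t2[OF j] by simp
  qed
qed

lemma transition_matrix_unit:
  fixes s :: "'k::field \<Rightarrow> 'v::ab_group_add \<Rightarrow> 'v"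
  assumes B1: "indexed_basis s b1 n" and B2: "indexed_basis s b2 n"
    and \<sigma>: "bij_betw \<sigma> {1..n} {1..n}"
    and lower: "\<And>i j. i \<in> {1..n} \<Longrightarrow> j \<in> {1..n} \<Longrightarrow> coord s b1 n (b2 j) i \<noteq> 0 \<Longrightarrow> (i, \<sigma> j) \<in> \<rho>"
    and upper: "\<And>i j. i \<in> {1..n} \<Longrightarrow> j \<in> {1..n} \<Longrightarrow> coord s b2 n (b1 i) j \<noteq> 0 \<Longrightarrow> (\<sigma> j, i) \<in> \<rho>"
  shows "(\<lambda>i t. if i \<in> {1..n} \<and> t \<in> {1..n} then coord s b1 n (b2 (inv_into {1..n} \<sigma> t)) i else 0)
           \<in> units_rho \<rho> n"
proof -
  define \<sigma>' where "\<sigma>' = inv_into {1..n} \<sigma>"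
  have \<sigma>': "bij_betw \<sigma>' {1..n} {1..n}" unfolding \<sigma>'_def by (rule bij_betw_inv_into[OF \<sigma>])
  have \<sigma>'_range: "\<sigma>' j \<in> {1..n}" if "j \<in> {1..n}" for j
    using \<sigma>' that unfolding bij_betw_def by blast
  have \<sigma>_\<sigma>': "\<sigma> (\<sigma>' j) = j" if "j \<in> {1..n}" for j
    using \<sigma> that unfolding \<sigma>'_def bij_betw_def by (metis f_inv_into_f)
  have \<sigma>'_inj: "\<sigma>' i = \<sigma>' j \<longleftrightarrow> i = j" if "i \<in> {1..n}" "j \<in> {1..n}" for i j
    using \<sigma>_\<sigma>' that by metis
  define A where "A i t = (if i \<in> {1..n} \<and> t \<in> {1..n} then coord s b1 n (b2 (\<sigma>' t)) i else 0)" for i t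
  define B where "B t i = (if i \<in> {1..n} \<and> t \<in> {1..n} then coord s b2 n (b1 i) (\<sigma>' t) else 0)" for t i
  have "A \<in> rho_mat \<rho>"
    unfolding rho_mat_def A_def using lower \<sigma>'_range \<sigma>_\<sigma>' by fastforce
  moreover have "B \<in> rho_mat \<rho>"
    unfolding rho_mat_def B_def using upper \<sigma>'_range \<sigma>_\<sigma>' by fastforce
  moreover have "mat_mult n A B i r = mat_one n i r" for i r
  proof (cases "i \<in> {1..n} \<and> r \<in> {1..n}")
    case True
    hence i: "i \<in> {1..n}" and r: "r \<in> {1..n}" by auto
    have "mat_mult n A B i r = (\<Sum>t=1..n. coord s b1 n (b2 (\<sigma>' t)) i * coord s b2 n (b1 r) (\<sigma>' t))"
      unfolding mat_mult_def A_def B_def by (rule sum.cong) (use i r in auto)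
    also have "\<dots> = (\<Sum>j=1..n. coord s b2 n (b1 r) j * coord s b1 n (b2 j) i)"
      using sum.reindex_bij_betw[OF \<sigma>'] by (simp add: mult.commute)
    also have "\<dots> = coord s b1 n (b1 r) i" by (rule crd_change_basis[OF B2 B1, symmetric])
    finally show ?thesis using indexed_basis.crd_basis[OF B1 i r] i by (simp add: mat_one_def)
  qed (auto simp: mat_mult_def mat_one_def A_def B_def)
  moreover have "mat_mult n B A j r = mat_one n j r" for j r
  proof (cases "j \<in> {1..n} \<and> r \<in> {1..n}")
    case True
    hence j: "j \<in> {1..n}" and r: "r \<in> {1..n}" by auto
    have "mat_mult n B A j r = (\<Sum>t=1..n. coord s b1 n (b2 (\<sigma>' r)) t * coord s b2 n (b1 t) (\<sigma>' j))"
      unfolding mat_mult_def A_def B_def by (rule sum.cong) (use j r in \<open>auto simp: mult.commute\<close>)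
    also have "\<dots> = coord s b2 n (b2 (\<sigma>' r)) (\<sigma>' j)" by (rule crd_change_basis[OF B1 B2, symmetric])
    finally show ?thesis
      using indexed_basis.crd_basis[OF B2 \<sigma>'_range[OF j] \<sigma>'_range[OF r]] \<sigma>'_inj[OF j r] j
      by (simp add: mat_one_def)
  qed (auto simp: mat_mult_def mat_one_def A_def B_def)
  ultimately have "A \<in> units_rho \<rho> n" unfolding units_rho_def by blast
  thus ?thesis unfolding A_def \<sigma>'_def .
qed

lemma card_le_if_crd_supported:
  assumes nb1: "indexed_basis s b1 n" and nb2: "indexed_basis s b2 n" and A: "A \<subseteq> {1..n}" and B: "B \<subseteq> {1..n}"
    and h: "\<And>j i. j \<in> A \<Longrightarrow> i \<in> {1..n} \<Longrightarrow> i \<notin> B \<Longrightarrow> coord s b1 n (b2 j) i = 0"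
  shows "card A \<le> card B"
proof -
  interpret B1: indexed_basis s b1 n by (rule nb1)
  interpret B2: indexed_basis s b2 n by (rule nb2)
  have sub: "b2 ` A \<subseteq> B1.span (b1 ` B)"
  proof
    fix x assume "x \<in> b2 ` A"
    then obtain j where j: "j \<in> A" "x = b2 j" by blast
    have "\<forall>i\<in>{1..n}. i \<notin> B \<longrightarrow> coord s b1 n (b2 j) i = 0" using h[OF j(1)] by blast
    thus "x \<in> B1.span (b1 ` B)" unfolding j(2) using B1.in_span_basis_iff[OF B] by blast
  qed
  have ind: "B1.independent (b2 ` A)" by (rule B1.independent_mono[OF B2.b_indep image_mono[OF A]])
  have fB: "finite (b1 ` B)" using finite_subset[OF B] by blast
  have "card (b2 ` A) \<le> card (b1 ` B)"
    using B1.independent_span_bound[OF fB ind sub] by blast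
  moreover have "card (b2 ` A) = card A" by (rule card_image[OF inj_on_subset[OF B2.b_inj A]])
  moreover have "card (b1 ` B) = card B" by (rule card_image[OF inj_on_subset[OF B1.b_inj B]])
  ultimately show ?thesis by simp
qed

section \<open>Order-preserving matching of classes\<close>

lemma rank_bij_betw:
  fixes Y :: "nat set" assumes fin: "finite Y"
  shows "bij_betw (\<lambda>y. card {t\<in>Y. t < y}) Y {..<card Y}"
proof -
  let ?r = "\<lambda>y. card {t\<in>Y. t < y}"
  have mono: "?r x < ?r y" if "x \<in> Y" "y \<in> Y" "x < y" for x y
  proof (rule psubset_card_mono)
    show "finite {t\<in>Y. t < y}" using fin by simp
    show "{t\<in>Y. t < x} < {t\<in>Y. t < y}" using that by auto
  qed
  have inj: "inj_on ?r Y"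
  proof (rule inj_onI)
    fix x y assume x: "x \<in> Y" and y: "y \<in> Y" and eq: "?r x = ?r y"
    show "x = y"
    proof (rule ccontr)
      assume "x \<noteq> y"
      hence "x < y \<or> y < x" by arith
      thus False using mono[OF x y] mono[OF y x] eq by auto
    qed
  qed
  have sub: "?r ` Y \<subseteq> {..<card Y}"
  proof
    fix z assume "z \<in> ?r ` Y"
    then obtain y where y: "y \<in> Y" "z = ?r y" by blast
    have "{t\<in>Y. t < y} < Y" using y by auto
    hence "?r y < card Y" using fin by (rule psubset_card_mono[rotated])
    thus "z \<in> {..<card Y}" using y by simp
  qed
  have "?r ` Y = {..<card Y}"
    by (rule card_subset_eq[OF _ sub]) (simp_all add: card_image[OF inj])
  thus ?thesis using inj by (simp add: bij_betw_def)
qed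

context
  fixes \<rho> :: "(nat \<times> nat) set" and n :: nat and g :: "nat set \<Rightarrow> nat set"
  assumes P: "preorder_on {1..n} \<rho>" and g: "g \<in> Aut0 \<rho> n"
begin

lemma Aut0_classes: "\<alpha> \<in> classes \<rho> n \<Longrightarrow> g \<alpha> \<in> classes \<rho> n"
  using g unfolding Aut0_def bij_betw_def by blast

lemma Aut0_card: "\<alpha> \<in> classes \<rho> n \<Longrightarrow> card (g \<alpha>) = card \<alpha>"
  using g unfolding Aut0_def by blast

lemma Aut0_le_iff: "\<alpha> \<in> classes \<rho> n \<Longrightarrow> \<beta> \<in> classes \<rho> n \<Longrightarrow> cls_le \<rho> (g \<alpha>) (g \<beta>) \<longleftrightarrow> cls_le \<rho> \<alpha> \<beta>"
  using g unfolding Aut0_def by blast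

lemma Aut0_inj: "\<alpha> \<in> classes \<rho> n \<Longrightarrow> \<beta> \<in> classes \<rho> n \<Longrightarrow> g \<alpha> = g \<beta> \<Longrightarrow> \<alpha> = \<beta>"
  using g unfolding Aut0_def bij_betw_def inj_on_def by blast

lemma classes_subset: "\<alpha> \<in> classes \<rho> n \<Longrightarrow> \<alpha> \<subseteq> {1..n}"
  using classes_cls[OF P] cls_sub[OF P] by blast

lemma tilde_rank: assumes j: "j \<in> {1..n}"
  shows "tilde \<rho> g j \<in> g (cls \<rho> j) \<and> card {t \<in> g (cls \<rho> j). t < tilde \<rho> g j} = card {t \<in> cls \<rho> j. t < j}"
proof -
  let ?X = "cls \<rho> j" let ?Y = "g (cls \<rho> j)"
  have X: "?X \<in> classes \<rho> n" by (rule cls_in_classes[OF P j])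
  have finY: "finite ?Y" using classes_subset[OF Aut0_classes[OF X]] finite_subset by blast
  have finX: "finite ?X" using classes_subset[OF X] finite_subset by blast
  have "{t \<in> ?X. t < j} < ?X" using cls_self[OF P j] by auto
  hence "card {t \<in> ?X. t < j} < card ?X" by (rule psubset_card_mono[OF finX])
  hence r: "card {t \<in> ?X. t < j} \<in> {..<card ?Y}" using Aut0_card[OF X] by simp
  have bij: "bij_betw (\<lambda>y. card {t\<in>?Y. t < y}) ?Y {..<card ?Y}" by (rule rank_bij_betw[OF finY])
  have ex: "\<exists>!y. y \<in> ?Y \<and> card {t\<in>?Y. t < y} = card {t \<in> ?X. t < j}"
  proof -
    have im: "(\<lambda>y. card {t\<in>?Y. t < y}) ` ?Y = {..<card ?Y}" using bij by (simp add: bij_betw_def)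
    have inj: "inj_on (\<lambda>y. card {t\<in>?Y. t < y}) ?Y" using bij by (simp add: bij_betw_def)
    have "card {t \<in> ?X. t < j} \<in> (\<lambda>y. card {t\<in>?Y. t < y}) ` ?Y" using r im by simp
    then obtain y where y: "y \<in> ?Y" and y2: "card {t \<in> ?X. t < j} = card {t\<in>?Y. t < y}" by (rule imageE)
    moreover have "y' = y" if "y' \<in> ?Y" "card {t\<in>?Y. t < y'} = card {t \<in> ?X. t < j}" for y'
      by (rule inj_onD[OF inj _ that(1) y]) (use that(2) y2 in simp)
    moreover have "card {t\<in>?Y. t < y} = card {t \<in> ?X. t < j}" using y2 by simp
    ultimately show ?thesis by blast
  qed
  show ?thesis unfolding tilde_def by (rule theI'[OF ex])
qed

lemma tilde_cls: assumes j: "j \<in> {1..n}" shows "cls \<rho> (tilde \<rho> g j) = g (cls \<rho> j)"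
proof -
  obtain k where k: "k \<in> {1..n}" "g (cls \<rho> j) = cls \<rho> k"
    using classes_cls[OF P Aut0_classes[OF cls_in_classes[OF P j]]] by blast
  show ?thesis using cls_mem[OF P] tilde_rank[OF j] k by metis
qed

lemma tilde_range: assumes j: "j \<in> {1..n}" shows "tilde \<rho> g j \<in> {1..n}"
  using tilde_rank[OF j] classes_subset[OF Aut0_classes[OF cls_in_classes[OF P j]]] by blast

lemma tilde_bij: "bij_betw (tilde \<rho> g) {1..n} {1..n}"
proof -
  have inj: "inj_on (tilde \<rho> g) {1..n}"
  proof (rule inj_onI)
    fix i j assume i: "i \<in> {1..n}" and j: "j \<in> {1..n}" and eq: "tilde \<rho> g i = tilde \<rho> g j"
    have "g (cls \<rho> i) = g (cls \<rho> j)" using tilde_cls[OF i] tilde_cls[OF j] eq by simp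
    hence c: "cls \<rho> i = cls \<rho> j" by (rule Aut0_inj[OF cls_in_classes[OF P i] cls_in_classes[OF P j]])
    let ?X = "cls \<rho> i"
    have finX: "finite ?X" using cls_sub[OF P] finite_subset by blast
    have "card {t \<in> ?X. t < i} = card {t \<in> ?X. t < j}"
      using tilde_rank[OF i] tilde_rank[OF j] eq c by metis
    moreover have "i \<in> ?X" "j \<in> ?X" using cls_self[OF P i] cls_self[OF P j] c by auto
    ultimately show "i = j" using rank_bij_betw[OF finX] unfolding bij_betw_def inj_on_def by blast
  qed
  have "tilde \<rho> g ` {1..n} = {1..n}"
    by (rule endo_inj_surj[OF _ _ inj]) (use tilde_range in auto)
  thus ?thesis using inj by (simp add: bij_betw_def)
qed

lemma tilde_iff: assumes i: "i \<in> {1..n}" and j: "j \<in> {1..n}"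
  shows "(tilde \<rho> g i, tilde \<rho> g j) \<in> \<rho> \<longleftrightarrow> (i, j) \<in> \<rho>"
proof -
  have "(tilde \<rho> g i, tilde \<rho> g j) \<in> \<rho> \<longleftrightarrow> cls_le \<rho> (cls \<rho> (tilde \<rho> g i)) (cls \<rho> (tilde \<rho> g j))"
    using cls_le_iff[OF P tilde_range[OF i] tilde_range[OF j]] by simp
  also have "\<dots> \<longleftrightarrow> cls_le \<rho> (g (cls \<rho> i)) (g (cls \<rho> j))" using tilde_cls[OF i] tilde_cls[OF j] by simp
  also have "\<dots> \<longleftrightarrow> cls_le \<rho> (cls \<rho> i) (cls \<rho> j)"
    by (rule Aut0_le_iff[OF cls_in_classes[OF P i] cls_in_classes[OF P j]])
  also have "\<dots> \<longleftrightarrow> (i, j) \<in> \<rho>" by (rule cls_le_iff[OF P i j])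
  finally show ?thesis .
qed

end

section \<open>Transport of pattern endomorphisms with a scaling cocycle\<close>

lemma Tfam_nonzero: "a \<in> Tfam \<rho> \<Longrightarrow> (i, j) \<in> \<rho> \<Longrightarrow> a i j \<noteq> 0"
  unfolding Tfam_def by blast
lemma Tfam_cocycle: "a \<in> Tfam \<rho> \<Longrightarrow> (i, j) \<in> \<rho> \<Longrightarrow> (j, r) \<in> \<rho> \<Longrightarrow> a i j * a j r = a i r"
  unfolding Tfam_def by blast
lemma Tfam_diag: assumes "a \<in> Tfam \<rho>" "(i, i) \<in> \<rho>" shows "a i i = 1"
proof -
  have "a i i * a i i = a i i" "a i i \<noteq> 0" using Tfam_nonzero Tfam_cocycle assms by blast+
  thus ?thesis by (metis mult_cancel_right1)
qed

locale scaled_transport =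
  V: indexed_basis s v n + W: indexed_basis s' w n
  for s :: "'k::field \<Rightarrow> 'v::ab_group_add \<Rightarrow> 'v" and v
    and s' :: "'k \<Rightarrow> 'w::ab_group_add \<Rightarrow> 'w" and w and n +
  fixes \<rho> :: "(nat \<times> nat) set" and a :: "nat \<Rightarrow> nat \<Rightarrow> 'k"
  assumes preorder: "preorder_on {1..n} \<rho>" and cocycle: "a \<in> Tfam \<rho>"
begin

definition transport :: "('v \<Rightarrow> 'v) \<Rightarrow> 'w \<Rightarrow> 'w" where
  "transport f = map_of_mat s' w n (\<lambda>i j. a i j * mat_of s v n f i j)"

lemma linear_transport: "W.lin (transport f)"
  unfolding transport_def by (rule W.lin_map_of_mat)

lemma mat_transport: "i \<in> {1..n} \<Longrightarrow> j \<in> {1..n} \<Longrightarrow> mat_of s' w n (transport f) i j = a i j * mat_of s v n f i j"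
  unfolding transport_def by (rule W.mat_map_of_mat)

lemma transport_Emat:
  assumes ij: "(i, j) \<in> \<rho>"
  shows "transport (Emat s v n i j) = (\<lambda>x. s' (a i j * coord s' w n x j) (w i))"
proof (rule W.mat_eqI[OF linear_transport W.lin_rank_one])
  have i: "i \<in> {1..n}" and j: "j \<in> {1..n}" using preorder_dom[OF preorder ij] by auto
  fix r t assume r: "r \<in> {1..n}" and t: "t \<in> {1..n}"
  show "mat_of s' w n (transport (Emat s v n i j)) r t = mat_of s' w n (\<lambda>x. s' (a i j * coord s' w n x j) (w i)) r t"
    unfolding mat_transport[OF r t] V.mat_Emat[OF i j r t]
    by (auto simp: mat_of_def W.crd_scale W.crd_basis[OF r i] W.crd_basis[OF j t])
qed

lemma transport_add: "transport (\<lambda>x. f x + h x) = (\<lambda>x. transport f x + transport h x)"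
  by (rule W.mat_eqI[OF linear_transport W.lin_add[OF linear_transport linear_transport]])
    (simp add: mat_transport W.mat_add V.mat_add algebra_simps)

lemma transport_scale: "transport (\<lambda>x. s c (f x)) = (\<lambda>x. s' c (transport f x))"
  by (rule W.mat_eqI[OF linear_transport W.lin_scale[OF linear_transport]])
    (simp add: mat_transport W.mat_scale V.mat_scale algebra_simps)

text \<open>The cocycle identity is what makes the entrywise scaling multiplicative on pattern matrices.\<close>

lemma transport_comp:
  assumes f: "f \<in> pattern_endos s \<rho> v n" and h: "h \<in> pattern_endos s \<rho> v n"
  shows "transport (f \<circ> h) = transport f \<circ> transport h"
proof (rule W.mat_eqI[OF linear_transport W.lin_comp[OF linear_transport linear_transport]])
  fix i r assume i: "i \<in> {1..n}" and r: "r \<in> {1..n}"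
  have "mat_of s' w n (transport f) i t * mat_of s' w n (transport h) t r
        = a i r * (mat_of s v n f i t * mat_of s v n h t r)" if t: "t \<in> {1..n}" for t
  proof (cases "mat_of s v n f i t = 0 \<or> mat_of s v n h t r = 0")
    case False
    hence it: "(i, t) \<in> \<rho>" and tr: "(t, r) \<in> \<rho>"
      using V.pattern_endos_entry[OF f i t] V.pattern_endos_entry[OF h t r] by auto
    show ?thesis using Tfam_cocycle[OF cocycle it tr]
      by (simp add: mat_transport[OF i t] mat_transport[OF t r] algebra_simps)
  qed (auto simp: mat_transport[OF i t] mat_transport[OF t r])
  hence "mat_of s' w n (transport f \<circ> transport h) i r
         = (\<Sum>t=1..n. a i r * (mat_of s v n f i t * mat_of s v n h t r))"
    unfolding W.mat_comp[OF linear_transport] by (rule sum.cong[OF refl])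
  thus "mat_of s' w n (transport (f \<circ> h)) i r = mat_of s' w n (transport f \<circ> transport h) i r"
    by (simp add: mat_transport[OF i r] V.mat_comp[OF V.pattern_endos_linear[OF f]] sum_distrib_left)
qed

lemma transport_id: "transport id = id"
proof (rule W.mat_eqI[OF linear_transport W.lin_id])
  fix i j assume i: "i \<in> {1..n}" and j: "j \<in> {1..n}"
  have "a i i = 1" by (rule Tfam_diag[OF cocycle preorder_refl[OF preorder i]])
  thus "mat_of s' w n (transport id) i j = mat_of s' w n id i j"
    unfolding mat_transport[OF i j] V.mat_id[OF i j] W.mat_id[OF i j] by auto
qed

lemma inj_on_transport: "inj_on transport (pattern_endos s \<rho> v n)"
proof (rule inj_onI)
  fix f h assume f: "f \<in> pattern_endos s \<rho> v n" and h: "h \<in> pattern_endos s \<rho> v n"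
    and eq: "transport f = transport h"
  show "f = h"
  proof (rule V.mat_eqI[OF V.pattern_endos_linear[OF f] V.pattern_endos_linear[OF h]])
    fix i j assume i: "i \<in> {1..n}" and j: "j \<in> {1..n}"
    show "mat_of s v n f i j = mat_of s v n h i j"
    proof (cases "(i, j) \<in> \<rho>")
      case True
      hence "a i j \<noteq> 0" by (rule Tfam_nonzero[OF cocycle])
      thus ?thesis using eq mat_transport[OF i j] by (metis mult_left_cancel)
    qed (simp add: V.pattern_endos_entry[OF f i j] V.pattern_endos_entry[OF h i j])
  qed
qed

lemma transport_image: "transport ` pattern_endos s \<rho> v n = pattern_endos s' \<rho> w n"
proof (intro equalityI subsetI)
  fix h assume "h \<in> transport ` pattern_endos s \<rho> v n"
  then obtain f where f: "f \<in> pattern_endos s \<rho> v n" and h: "h = transport f" by blast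
  show "h \<in> pattern_endos s' \<rho> w n"
    unfolding h pattern_endos_def
    using linear_transport by (auto simp: mat_transport V.pattern_endos_entry[OF f])
next
  fix h assume h: "h \<in> pattern_endos s' \<rho> w n"
  define f where "f = map_of_mat s v n (\<lambda>i j. mat_of s' w n h i j / a i j)"
  have mat_f: "mat_of s v n f i j = mat_of s' w n h i j / a i j" if "i \<in> {1..n}" "j \<in> {1..n}" for i j
    unfolding f_def using V.mat_map_of_mat[OF that] .
  have "f \<in> pattern_endos s \<rho> v n"
    unfolding pattern_endos_def using V.lin_map_of_mat mat_f W.pattern_endos_entry[OF h]
    by (simp add: f_def)
  moreover have "transport f = h"
  proof (rule W.mat_eqI[OF linear_transport W.pattern_endos_linear[OF h]])
    fix i j assume i: "i \<in> {1..n}" and j: "j \<in> {1..n}"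
    show "mat_of s' w n (transport f) i j = mat_of s' w n h i j"
    proof (cases "(i, j) \<in> \<rho>")
      case True thus ?thesis using Tfam_nonzero[OF cocycle True] by (simp add: mat_transport[OF i j] mat_f[OF i j])
    qed (simp add: mat_transport[OF i j] mat_f[OF i j] W.pattern_endos_entry[OF h i j])
  qed
  ultimately show "h \<in> transport ` pattern_endos s \<rho> v n" by blast
qed

lemma alg_iso_transport: "alg_iso s s' (pattern_endos s \<rho> v n) (pattern_endos s' \<rho> w n) transport"
  unfolding alg_iso_def
  using bij_betw_imageI[OF inj_on_transport transport_image] transport_add transport_scale transport_comp transport_id
  by blast

end

lemma twisted_basis:
  fixes s' :: "'k::field \<Rightarrow> 'w::ab_group_add \<Rightarrow> 'w"
  assumes V': "indexed_basis s' v' n" and P: "preorder_on {1..n} \<rho>"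
    and A: "A \<in> units_rho \<rho> n" and g: "g \<in> Aut0 \<rho> n"
  defines "w \<equiv> wvec s' v' n (mat_twist \<rho> g A)"
  shows "indexed_basis s' w n" and "pattern_endos s' \<rho> v' n = pattern_endos s' \<rho> w n"
proof -
  obtain B where B: "B \<in> rho_mat \<rho>" "mat_mult n A B = mat_one n" "mat_mult n B A = mat_one n"
    using A unfolding units_rho_def by blast
  have Ar: "A \<in> rho_mat \<rho>" using A unfolding units_rho_def by blast
  define \<sigma> where "\<sigma> = tilde \<rho> g"
  have sbij: "bij_betw \<sigma> {1..n} {1..n}" unfolding \<sigma>_def by (rule tilde_bij[OF P g])
  have srange: "\<sigma> j \<in> {1..n}" if "j \<in> {1..n}" for j unfolding \<sigma>_def by (rule tilde_range[OF P g that])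
  have sinj: "\<sigma> i = \<sigma> j \<longleftrightarrow> i = j" if "i \<in> {1..n}" "j \<in> {1..n}" for i j
    using sbij that unfolding bij_betw_def inj_on_def by blast
  have AB: "(\<Sum>t=1..n. A i (\<sigma> t) * B (\<sigma> t) r) = (if i = r then 1 else 0)"
    if i: "i \<in> {1..n}" and r: "r \<in> {1..n}" for i r
  proof -
    have "(\<Sum>t=1..n. A i (\<sigma> t) * B (\<sigma> t) r) = mat_mult n A B i r"
      unfolding mat_mult_def by (rule sum.reindex_bij_betw[OF sbij])
    thus ?thesis using B(2) i by (simp add: mat_one_def)
  qed
  have BA: "(\<Sum>t=1..n. B (\<sigma> j) t * A t (\<sigma> r)) = (if j = r then 1 else 0)"
    if j: "j \<in> {1..n}" and r: "r \<in> {1..n}" for j r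
  proof -
    have "(\<Sum>t=1..n. B (\<sigma> j) t * A t (\<sigma> r)) = mat_mult n B A (\<sigma> j) (\<sigma> r)" by (simp add: mat_mult_def)
    thus ?thesis using B(3) srange[OF j] sinj[OF j r] by (simp add: mat_one_def)
  qed
  have w_eq: "w = (\<lambda>j. \<Sum>i=1..n. s' (A i (\<sigma> j)) (v' i))"
    unfolding w_def wvec_def mat_twist_def \<sigma>_def by simp
  have W: "indexed_basis s' w n"
    and cw1: "\<And>i j. i \<in> {1..n} \<Longrightarrow> j \<in> {1..n} \<Longrightarrow> coord s' v' n (w j) i = A i (\<sigma> j)"
    and cw2: "\<And>r j. r \<in> {1..n} \<Longrightarrow> j \<in> {1..n} \<Longrightarrow> coord s' w n (v' r) j = B (\<sigma> j) r"
    using indexed_basis_change[OF V' _ _ w_eq, of "\<lambda>j r. B (\<sigma> j) r"] AB BA by auto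
  show "indexed_basis s' w n" by (rule W)
  show "pattern_endos s' \<rho> v' n = pattern_endos s' \<rho> w n"
  proof (rule pattern_endos_eq[OF V' W P sbij])
    fix i j assume i: "i \<in> {1..n}" and j: "j \<in> {1..n}"
    show "(\<sigma> i, \<sigma> j) \<in> \<rho> \<longleftrightarrow> (i, j) \<in> \<rho>" unfolding \<sigma>_def by (rule tilde_iff[OF P g i j])
  next
    fix i j assume i: "i \<in> {1..n}" and j: "j \<in> {1..n}" and ne: "coord s' v' n (w j) i \<noteq> 0"
    show "(i, \<sigma> j) \<in> \<rho>" using ne cw1[OF i j] Ar unfolding rho_mat_def by auto
  next
    fix i j assume i: "i \<in> {1..n}" and j: "j \<in> {1..n}" and ne: "coord s' w n (v' i) j \<noteq> 0"
    show "(\<sigma> j, i) \<in> \<rho>" using ne cw2[OF i j] B(1) unfolding rho_mat_def by auto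
  qed
qed

lemma alg_iso_Fmat:
  fixes s :: "'k::field \<Rightarrow> 'v::ab_group_add \<Rightarrow> 'v" and s' :: "'k \<Rightarrow> 'w::ab_group_add \<Rightarrow> 'w"
  assumes V: "indexed_basis s v n" and V': "indexed_basis s' v' n" and P: "preorder_on {1..n} \<rho>"
    and A: "A \<in> units_rho \<rho> n" and g: "g \<in> Aut0 \<rho> n" and a: "a \<in> Tfam \<rho>"
  shows "\<exists>\<phi>. alg_iso s s' (pattern_endos s \<rho> v n) (pattern_endos s' \<rho> v' n) \<phi>
           \<and> (\<forall>(i, j) \<in> \<rho>. \<phi> (Emat s v n i j) = Fmat s' v' n \<rho> A g a i j)"
proof -
  let ?w = "wvec s' v' n (mat_twist \<rho> g A)"
  interpret T: scaled_transport s v s' ?w n \<rho> a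
    using V twisted_basis(1)[OF V' P A g] P a
    unfolding scaled_transport_def scaled_transport_axioms_def by blast
  show ?thesis
    using T.alg_iso_transport T.transport_Emat twisted_basis(2)[OF V' P A g]
    unfolding Fmat_def Let_def by auto
qed

section \<open>Bases with the same pattern algebra\<close>

locale compatible_bases =
  V: indexed_basis s v n + U: indexed_basis s u n
  for s :: "'k::field \<Rightarrow> 'v::ab_group_add \<Rightarrow> 'v" and v u n +
  fixes \<rho> :: "(nat \<times> nat) set"
  assumes preorder: "preorder_on {1..n} \<rho>"
    and Emat_in: "\<And>i j. (i, j) \<in> \<rho> \<Longrightarrow> Emat s u n i j \<in> pattern_endos s \<rho> v n"
    and pattern_entry: "\<And>h i j. h \<in> pattern_endos s \<rho> v n \<Longrightarrow> i \<in> {1..n} \<Longrightarrow> j \<in> {1..n} \<Longrightarrow>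
           (i, j) \<notin> \<rho> \<Longrightarrow> mat_of s u n h i j = 0"
begin

lemma le_if_transition_nonzero_v:
  assumes "a \<in> {1..n}" "b \<in> {1..n}" "j \<in> {1..n}" "k \<in> {1..n}" "(a, b) \<in> \<rho>"
    and "coord s u n (v a) j \<noteq> 0" "coord s v n (u k) b \<noteq> 0"
  shows "(j, k) \<in> \<rho>"
proof (rule ccontr)
  assume jk: "(j, k) \<notin> \<rho>"
  have "mat_of s u n (Emat s v n a b) j k = 0"
    by (rule pattern_entry[OF V.Emat_in_pattern_endos[OF assms(5) preorder] assms(3,4) jk])
  moreover have "mat_of s u n (Emat s v n a b) j k = coord s v n (u k) b * coord s u n (v a) j"
    by (simp add: mat_of_def V.Emat_apply U.crd_scale)
  ultimately show False using assms(6,7) by simp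
qed

lemma le_if_transition_nonzero_u:
  assumes "a \<in> {1..n}" "b \<in> {1..n}" "j \<in> {1..n}" "k \<in> {1..n}" "(j, k) \<in> \<rho>"
    and "coord s v n (u j) a \<noteq> 0" "coord s u n (v b) k \<noteq> 0"
  shows "(a, b) \<in> \<rho>"
proof (rule ccontr)
  assume ab: "(a, b) \<notin> \<rho>"
  have "mat_of s v n (Emat s u n j k) a b = 0"
    by (rule V.pattern_endos_entry[OF Emat_in[OF assms(5)] assms(1,2) ab])
  moreover have "mat_of s v n (Emat s u n j k) a b = coord s u n (v b) k * coord s v n (u j) a"
    by (simp add: mat_of_def U.Emat_apply V.crd_scale)
  ultimately show False using assms(6,7) by simp
qed

text \<open>The partner of \<open>u\<^sub>j\<close> is an index where both transition matrices are nonzero;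
  it exists because the two transition matrices are mutually inverse.\<close>

definition partner :: "nat \<Rightarrow> nat" where
  "partner j = (SOME i. i \<in> {1..n} \<and> coord s v n (u j) i \<noteq> 0 \<and> coord s u n (v i) j \<noteq> 0)"

lemma partner:
  assumes j: "j \<in> {1..n}"
  shows "partner j \<in> {1..n} \<and> coord s v n (u j) (partner j) \<noteq> 0 \<and> coord s u n (v (partner j)) j \<noteq> 0"
proof -
  have "\<exists>i\<in>{1..n}. coord s v n (u j) i \<noteq> 0 \<and> coord s u n (v i) j \<noteq> 0"
  proof -
    have "(\<Sum>i=1..n. coord s v n (u j) i * coord s u n (v i) j) \<noteq> 0"
      using crd_transition_inverse[OF U.indexed_basis_axioms V.indexed_basis_axioms j] by simp
    then obtain i where "i \<in> {1..n}" "coord s v n (u j) i * coord s u n (v i) j \<noteq> 0"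
      by (meson sum.not_neutral_contains_not_neutral)
    thus ?thesis by auto
  qed
  thus ?thesis unfolding partner_def Bex_def by (rule someI_ex)
qed

lemma partner_le_iff:
  assumes j: "j \<in> {1..n}" and k: "k \<in> {1..n}"
  shows "(partner j, partner k) \<in> \<rho> \<longleftrightarrow> (j, k) \<in> \<rho>"
proof
  assume "(partner j, partner k) \<in> \<rho>"
  thus "(j, k) \<in> \<rho>"
    using le_if_transition_nonzero_v[of "partner j" "partner k" j k] partner[OF j] partner[OF k] j k by blast
next
  assume "(j, k) \<in> \<rho>"
  thus "(partner j, partner k) \<in> \<rho>"
    using le_if_transition_nonzero_u[of "partner j" "partner k" j k] partner[OF j] partner[OF k] j k by blast
qed

lemma le_partner:
  assumes "i \<in> {1..n}" "j \<in> {1..n}" "coord s v n (u j) i \<noteq> 0"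
  shows "(i, partner j) \<in> \<rho>"
  using le_if_transition_nonzero_u[OF assms(1) _ assms(2,2) preorder_refl[OF preorder assms(2)] assms(3),
      of "partner j"] partner[OF assms(2)] by blast

lemma partner_le:
  assumes "i \<in> {1..n}" "j \<in> {1..n}" "coord s u n (v i) j \<noteq> 0"
  shows "(partner j, i) \<in> \<rho>"
  using le_if_transition_nonzero_u[OF _ assms(1) assms(2,2) preorder_refl[OF preorder assms(2)] _ assms(3),
      of "partner j"] partner[OF assms(2)] by blast

lemma partner_covers:
  assumes i: "i \<in> {1..n}"
  shows "\<exists>j\<in>{1..n}. (partner j, i) \<in> \<rho> \<and> (i, partner j) \<in> \<rho>"
proof -
  have "\<exists>j\<in>{1..n}. coord s v n (u j) i \<noteq> 0 \<and> coord s u n (v i) j \<noteq> 0"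
  proof -
    have "(\<Sum>j=1..n. coord s u n (v i) j * coord s v n (u j) i) \<noteq> 0"
      using crd_transition_inverse[OF V.indexed_basis_axioms U.indexed_basis_axioms i] by simp
    then obtain j where "j \<in> {1..n}" "coord s u n (v i) j * coord s v n (u j) i \<noteq> 0"
      by (meson sum.not_neutral_contains_not_neutral)
    thus ?thesis by auto
  qed
  thus ?thesis using le_partner[OF i] partner_le[OF i] by blast
qed

text \<open>Both inequalities compare the spans of the two bases over a down-set.\<close>

lemma card_partner_preimage:
  assumes D: "D \<subseteq> {1..n}" and down: "\<And>i i'. i \<in> D \<Longrightarrow> (i', i) \<in> \<rho> \<Longrightarrow> i' \<in> D"
  shows "card {j\<in>{1..n}. partner j \<in> D} = card D"
proof (rule antisym)
  show "card {j\<in>{1..n}. partner j \<in> D} \<le> card D"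
  proof (rule card_le_if_crd_supported[OF V.indexed_basis_axioms U.indexed_basis_axioms _ D])
    fix j i assume "j \<in> {j\<in>{1..n}. partner j \<in> D}" "i \<in> {1..n}" "i \<notin> D"
    thus "coord s v n (u j) i = 0" using le_partner down by blast
  qed blast
  show "card D \<le> card {j\<in>{1..n}. partner j \<in> D}"
  proof (rule card_le_if_crd_supported[OF U.indexed_basis_axioms V.indexed_basis_axioms D])
    fix i j assume "i \<in> D" "j \<in> {1..n}" "j \<notin> {j\<in>{1..n}. partner j \<in> D}"
    thus "coord s u n (v i) j = 0" using partner_le D down by blast
  qed blast
qed

text \<open>Well defined on classes because \<open>partner\<close> reflects and preserves \<open>\<rho>\<close>.\<close>

definition class_map :: "nat set \<Rightarrow> nat set" where
  "class_map \<alpha> = cls \<rho> (partner (SOME j. j \<in> {1..n} \<and> \<alpha> = cls \<rho> j))"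

lemma class_map_cls:
  assumes j: "j \<in> {1..n}"
  shows "class_map (cls \<rho> j) = cls \<rho> (partner j)"
proof -
  define j' where "j' = (SOME j'. j' \<in> {1..n} \<and> cls \<rho> j = cls \<rho> j')"
  have j': "j' \<in> {1..n}" "cls \<rho> j = cls \<rho> j'"
    unfolding j'_def using someI[of "\<lambda>j'. j' \<in> {1..n} \<and> cls \<rho> j = cls \<rho> j'" j] j by auto
  hence "(partner j, partner j') \<in> \<rho>" "(partner j', partner j) \<in> \<rho>"
    using cls_eq_iff[OF preorder j j'(1)] partner_le_iff[OF j j'(1)] partner_le_iff[OF j'(1) j] by auto
  hence "cls \<rho> (partner j') = cls \<rho> (partner j)"
    using cls_eq_iff[OF preorder] partner[OF j] partner[OF j'(1)] by blast
  thus ?thesis unfolding class_map_def j'_def[symmetric] by simp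
qed

lemma cls_eq_partner_preimage:
  assumes j: "j \<in> {1..n}"
  shows "cls \<rho> j = {k\<in>{1..n}. partner k \<in> {i\<in>{1..n}. (i, partner j) \<in> \<rho>}}
                   - {k\<in>{1..n}. partner k \<in> {i\<in>{1..n}. (i, partner j) \<in> \<rho> \<and> (partner j, i) \<notin> \<rho>}}"
proof (intro equalityI subsetI)
  fix k assume "k \<in> cls \<rho> j"
  hence k: "k \<in> {1..n}" "(j, k) \<in> \<rho>" "(k, j) \<in> \<rho>"
    unfolding cls_def using preorder_dom[OF preorder] by auto
  thus "k \<in> {k\<in>{1..n}. partner k \<in> {i\<in>{1..n}. (i, partner j) \<in> \<rho>}}
           - {k\<in>{1..n}. partner k \<in> {i\<in>{1..n}. (i, partner j) \<in> \<rho> \<and> (partner j, i) \<notin> \<rho>}}"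
    using partner_le_iff[OF j k(1)] partner_le_iff[OF k(1) j] partner[OF k(1)] by auto
next
  fix k assume "k \<in> {k\<in>{1..n}. partner k \<in> {i\<in>{1..n}. (i, partner j) \<in> \<rho>}}
           - {k\<in>{1..n}. partner k \<in> {i\<in>{1..n}. (i, partner j) \<in> \<rho> \<and> (partner j, i) \<notin> \<rho>}}"
  hence k: "k \<in> {1..n}" "(partner k, partner j) \<in> \<rho>" "(partner j, partner k) \<in> \<rho>" by auto
  thus "k \<in> cls \<rho> j"
    using partner_le_iff[OF j k(1)] partner_le_iff[OF k(1) j] unfolding cls_def by auto
qed

lemma card_class_map:
  assumes j: "j \<in> {1..n}"
  shows "card (class_map (cls \<rho> j)) = card (cls \<rho> j)"
proof -
  define q where "q = partner j"
  define Dle where "Dle = {i\<in>{1..n}. (i, q) \<in> \<rho>}"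
  define Dlt where "Dlt = {i\<in>{1..n}. (i, q) \<in> \<rho> \<and> (q, i) \<notin> \<rho>}"
  have card_Dle: "card {j\<in>{1..n}. partner j \<in> Dle} = card Dle"
  proof (rule card_partner_preimage)
    fix i i' assume "i \<in> Dle" "(i', i) \<in> \<rho>"
    thus "i' \<in> Dle"
      unfolding Dle_def using preorder_dom[OF preorder] preorder_trans[OF preorder] by blast
  qed (auto simp: Dle_def)
  have card_Dlt: "card {j\<in>{1..n}. partner j \<in> Dlt} = card Dlt"
  proof (rule card_partner_preimage)
    fix i i' assume "i \<in> Dlt" "(i', i) \<in> \<rho>"
    thus "i' \<in> Dlt"
      unfolding Dlt_def using preorder_dom[OF preorder] preorder_trans[OF preorder] by blast
  qed (auto simp: Dlt_def)
  have "cls \<rho> j = {k\<in>{1..n}. partner k \<in> Dle} - {k\<in>{1..n}. partner k \<in> Dlt}"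
    unfolding Dle_def Dlt_def q_def by (rule cls_eq_partner_preimage[OF j])
  moreover have "class_map (cls \<rho> j) = Dle - Dlt"
  proof -
    have "cls \<rho> q = Dle - Dlt"
      unfolding Dle_def Dlt_def cls_def using preorder_dom[OF preorder] by auto
    thus ?thesis by (simp add: class_map_cls[OF j] q_def)
  qed
  moreover have "card ({k\<in>{1..n}. partner k \<in> Dle} - {k\<in>{1..n}. partner k \<in> Dlt})
      = card {k\<in>{1..n}. partner k \<in> Dle} - card {k\<in>{1..n}. partner k \<in> Dlt}"
    by (rule card_Diff_subset) (auto simp: Dle_def Dlt_def)
  moreover have "card (Dle - Dlt) = card Dle - card Dlt"
    by (rule card_Diff_subset) (auto simp: Dle_def Dlt_def)
  ultimately show ?thesis using card_Dle card_Dlt by simp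
qed

lemma bij_betw_class_map: "bij_betw class_map (classes \<rho> n) (classes \<rho> n)"
proof (rule bij_betw_imageI)
  show "inj_on class_map (classes \<rho> n)"
  proof (rule inj_onI)
    fix \<alpha> \<beta> assume a: "\<alpha> \<in> classes \<rho> n" and b: "\<beta> \<in> classes \<rho> n" and eq: "class_map \<alpha> = class_map \<beta>"
    obtain j where j: "j \<in> {1..n}" "\<alpha> = cls \<rho> j" using classes_cls[OF preorder a] by blast
    obtain k where k: "k \<in> {1..n}" "\<beta> = cls \<rho> k" using classes_cls[OF preorder b] by blast
    have "cls \<rho> (partner j) = cls \<rho> (partner k)" using eq class_map_cls j k by simp
    hence "(j, k) \<in> \<rho> \<and> (k, j) \<in> \<rho>"
      using cls_eq_iff[OF preorder] partner[OF j(1)] partner[OF k(1)]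
        partner_le_iff[OF j(1) k(1)] partner_le_iff[OF k(1) j(1)] by blast
    thus "\<alpha> = \<beta>" using cls_eq_iff[OF preorder j(1) k(1)] j k by simp
  qed
  show "class_map ` classes \<rho> n = classes \<rho> n"
  proof (intro equalityI subsetI)
    fix \<gamma> assume "\<gamma> \<in> class_map ` classes \<rho> n"
    then obtain j where "j \<in> {1..n}" "\<gamma> = class_map (cls \<rho> j)"
      using classes_cls[OF preorder] by blast
    thus "\<gamma> \<in> classes \<rho> n" using class_map_cls cls_in_classes[OF preorder] partner by simp
  next
    fix \<gamma> assume "\<gamma> \<in> classes \<rho> n"
    then obtain i where i: "i \<in> {1..n}" "\<gamma> = cls \<rho> i" using classes_cls[OF preorder] by blast
    obtain j where j: "j \<in> {1..n}" "(partner j, i) \<in> \<rho>" "(i, partner j) \<in> \<rho>"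
      using partner_covers[OF i(1)] by blast
    have "\<gamma> = class_map (cls \<rho> j)"
      using cls_eq_iff[OF preorder i(1)] partner[OF j(1)] j i class_map_cls[OF j(1)] by simp
    thus "\<gamma> \<in> class_map ` classes \<rho> n" using cls_in_classes[OF preorder j(1)] by blast
  qed
qed

lemma class_map_Aut0: "class_map \<in> Aut0 \<rho> n"
  unfolding Aut0_def
proof (intro CollectI conjI ballI bij_betw_class_map)
  fix \<alpha> \<beta> assume a: "\<alpha> \<in> classes \<rho> n" and b: "\<beta> \<in> classes \<rho> n"
  obtain j where j: "j \<in> {1..n}" "\<alpha> = cls \<rho> j" using classes_cls[OF preorder a] by blast
  obtain k where k: "k \<in> {1..n}" "\<beta> = cls \<rho> k" using classes_cls[OF preorder b] by blast
  show "cls_le \<rho> \<alpha> \<beta> = cls_le \<rho> (class_map \<alpha>) (class_map \<beta>)"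
    using cls_le_iff[OF preorder j(1) k(1)] cls_le_iff[OF preorder, of "partner j" "partner k"]
      partner[OF j(1)] partner[OF k(1)] partner_le_iff[OF j(1) k(1)] class_map_cls j k by simp
next
  fix \<alpha> assume "\<alpha> \<in> classes \<rho> n"
  then obtain j where "j \<in> {1..n}" "\<alpha> = cls \<rho> j" using classes_cls[OF preorder] by blast
  thus "card (class_map \<alpha>) = card \<alpha>" using card_class_map by simp
qed

lemma tilde_class_map_equiv:
  assumes j: "j \<in> {1..n}"
  shows "(tilde \<rho> class_map j, partner j) \<in> \<rho> \<and> (partner j, tilde \<rho> class_map j) \<in> \<rho>"
proof -
  have "cls \<rho> (tilde \<rho> class_map j) = cls \<rho> (partner j)"
    using tilde_cls[OF preorder class_map_Aut0 j] class_map_cls[OF j] by simp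
  thus ?thesis using cls_eq_iff[OF preorder tilde_range[OF preorder class_map_Aut0 j]] partner[OF j] by blast
qed

lemma Aut0_bounds_transition:
  "\<exists>g\<in>Aut0 \<rho> n.
     (\<forall>i\<in>{1..n}. \<forall>j\<in>{1..n}. coord s v n (u j) i \<noteq> 0 \<longrightarrow> (i, tilde \<rho> g j) \<in> \<rho>)
   \<and> (\<forall>i\<in>{1..n}. \<forall>j\<in>{1..n}. coord s u n (v i) j \<noteq> 0 \<longrightarrow> (tilde \<rho> g j, i) \<in> \<rho>)"
proof (intro bexI[OF _ class_map_Aut0] conjI ballI impI)
  fix i j assume i: "i \<in> {1..n}" and j: "j \<in> {1..n}"
  { assume "coord s v n (u j) i \<noteq> 0"
    thus "(i, tilde \<rho> class_map j) \<in> \<rho>"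
      using le_partner[OF i j] tilde_class_map_equiv[OF j] preorder_trans[OF preorder] by blast }
  { assume "coord s u n (v i) j \<noteq> 0"
    thus "(tilde \<rho> class_map j, i) \<in> \<rho>"
      using partner_le[OF i j] tilde_class_map_equiv[OF j] preorder_trans[OF preorder] by blast }
qed

end

section \<open>Isomorphisms between pattern algebras\<close>

locale pattern_alg_iso =
  V: indexed_basis s v n + V': indexed_basis s' v' n
  for s :: "'k::field \<Rightarrow> 'v::ab_group_add \<Rightarrow> 'v" and v
    and s' :: "'k \<Rightarrow> 'w::ab_group_add \<Rightarrow> 'w" and v' and n +
  fixes \<rho> :: "(nat \<times> nat) set" and \<phi> :: "('v \<Rightarrow> 'v) \<Rightarrow> 'w \<Rightarrow> 'w"
  assumes preorder: "preorder_on {1..n} \<rho>"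
    and iso: "alg_iso s s' (pattern_endos s \<rho> v n) (pattern_endos s' \<rho> v' n) \<phi>"
begin

abbreviation (input) E where "E \<equiv> pattern_endos s \<rho> v n"
abbreviation (input) E' where "E' \<equiv> pattern_endos s' \<rho> v' n"

lemma phi_bij: "bij_betw \<phi> E E'"
  using iso unfolding alg_iso_def by blast

lemma phi_add: "f \<in> E \<Longrightarrow> h \<in> E \<Longrightarrow> \<phi> (\<lambda>x. f x + h x) = (\<lambda>x. \<phi> f x + \<phi> h x)"
  using iso unfolding alg_iso_def by blast

lemma phi_scale: "f \<in> E \<Longrightarrow> \<phi> (\<lambda>x. s c (f x)) = (\<lambda>x. s' c (\<phi> f x))"
  using iso unfolding alg_iso_def by blast

lemma phi_comp: "f \<in> E \<Longrightarrow> h \<in> E \<Longrightarrow> \<phi> (f \<circ> h) = \<phi> f \<circ> \<phi> h"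
  using iso unfolding alg_iso_def by blast

lemma phi_id: "\<phi> id = id"
  using iso unfolding alg_iso_def by blast

lemma phi_in: "f \<in> E \<Longrightarrow> \<phi> f \<in> E'"
  using phi_bij unfolding bij_betw_def by blast

lemma phi_surj: "h \<in> E' \<Longrightarrow> \<exists>f\<in>E. h = \<phi> f"
  using phi_bij unfolding bij_betw_def by blast

lemma phi_inj: "f \<in> E \<Longrightarrow> h \<in> E \<Longrightarrow> \<phi> f = \<phi> h \<Longrightarrow> f = h"
  using phi_bij unfolding bij_betw_def inj_on_def by blast

lemma phi_zero: "\<phi> (\<lambda>x. 0) = (\<lambda>x. 0)"
proof
  fix x
  have "\<phi> (\<lambda>x. 0 + 0) = (\<lambda>x. \<phi> (\<lambda>x. 0) x + \<phi> (\<lambda>x. 0) x)"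
    by (rule phi_add[OF V.zero_in_pattern_endos V.zero_in_pattern_endos])
  thus "\<phi> (\<lambda>x. 0) x = 0" by (metis add.right_neutral add_cancel_right_right)
qed

lemma phi_sum:
  assumes "finite I" "\<And>i. i \<in> I \<Longrightarrow> F i \<in> E"
  shows "(\<lambda>x. \<Sum>i\<in>I. F i x) \<in> E \<and> \<phi> (\<lambda>x. \<Sum>i\<in>I. F i x) = (\<lambda>x. \<Sum>i\<in>I. \<phi> (F i) x)"
  using assms
proof (induction I rule: finite_induct)
  case empty show ?case using phi_zero V.zero_in_pattern_endos by simp
next
  case (insert i I)
  hence Fi: "F i \<in> E" and IH: "(\<lambda>x. \<Sum>i\<in>I. F i x) \<in> E" "\<phi> (\<lambda>x. \<Sum>i\<in>I. F i x) = (\<lambda>x. \<Sum>i\<in>I. \<phi> (F i) x)"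
    by auto
  show ?case
    using V.add_in_pattern_endos[OF Fi IH(1)] phi_add[OF Fi IH(1)] IH(2) insert.hyps by simp
qed

lemma Emat_diag_in: "i \<in> {1..n} \<Longrightarrow> Emat s v n i i \<in> E"
  by (rule V.Emat_in_pattern_endos[OF preorder_refl[OF preorder] preorder])

definition idem :: "nat \<Rightarrow> 'w \<Rightarrow> 'w" where
  "idem i = \<phi> (Emat s v n i i)"

lemma idem_in: "i \<in> {1..n} \<Longrightarrow> idem i \<in> E'"
  unfolding idem_def by (rule phi_in[OF Emat_diag_in])

lemma linear_idem: "i \<in> {1..n} \<Longrightarrow> V'.lin (idem i)"
  by (rule V'.pattern_endos_linear[OF idem_in])

lemma idem_comp:
  assumes i: "i \<in> {1..n}" and j: "j \<in> {1..n}"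
  shows "idem i (idem j x) = (if i = j then idem i x else 0)"
proof -
  have "idem i \<circ> idem j = \<phi> (Emat s v n i i \<circ> Emat s v n j j)"
    unfolding idem_def by (rule phi_comp[OF Emat_diag_in[OF i] Emat_diag_in[OF j], symmetric])
  also have "\<dots> = (if i = j then idem i else (\<lambda>x. 0))"
    unfolding V.Emat_comp[OF i i j j] idem_def using phi_zero by simp
  finally show ?thesis by (metis comp_apply)
qed

lemma sum_idem: "(\<Sum>i=1..n. idem i x) = x"
proof -
  have "id = (\<lambda>x. \<Sum>i=1..n. Emat s v n i i x)"
    using V.basis_expansion by (auto simp: V.Emat_apply)
  hence "\<phi> id = (\<lambda>x. \<Sum>i=1..n. idem i x)"
    using phi_sum[of "{1..n}" "\<lambda>i. Emat s v n i i"] Emat_diag_in by (simp add: idem_def)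
  thus ?thesis using phi_id by (metis id_apply)
qed

text \<open>The corner algebras \<open>E\<^sub>i\<^sub>i End(F) E\<^sub>i\<^sub>i\<close> are the scalars, and \<open>\<phi>\<close> preserves this.\<close>

lemma idem_corner:
  assumes i: "i \<in> {1..n}" and h: "h \<in> E'"
  shows "\<exists>\<kappa>. idem i \<circ> h \<circ> idem i = (\<lambda>x. s' \<kappa> (idem i x))"
proof -
  obtain F where F: "F \<in> E" "h = \<phi> F" using phi_surj[OF h] by blast
  have lF: "V.lin F" using F(1) by (rule V.pattern_endos_linear)
  have c: "Emat s v n i i \<circ> (F \<circ> Emat s v n i i) = (\<lambda>x. s (mat_of s v n F i i) (Emat s v n i i x))"
    by (auto simp: V.Emat_apply V.lin_map_scale[OF lF] V.crd_scale mat_of_def mult.commute)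
  have "idem i \<circ> h \<circ> idem i = \<phi> (Emat s v n i i \<circ> (F \<circ> Emat s v n i i))"
    unfolding F(2) idem_def
      phi_comp[OF Emat_diag_in[OF i] V.comp_in_pattern_endos[OF preorder F(1) Emat_diag_in[OF i]]]
      phi_comp[OF F(1) Emat_diag_in[OF i]]
    by (simp add: comp_assoc)
  also have "\<dots> = (\<lambda>x. s' (mat_of s v n F i i) (idem i x))"
    unfolding c idem_def by (rule phi_scale[OF Emat_diag_in[OF i]])
  finally show ?thesis by blast
qed

lemma idem_nonzero:
  assumes i: "i \<in> {1..n}"
  shows "idem i \<noteq> (\<lambda>x. 0)"
proof
  assume "idem i = (\<lambda>x. 0)"
  hence "Emat s v n i i = (\<lambda>x. 0)"
    using phi_inj[OF Emat_diag_in[OF i] V.zero_in_pattern_endos] phi_zero by (simp add: idem_def)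
  hence "Emat s v n i i (v i) = 0" by simp
  thus False using V.basis_nonzero[OF i] by (simp add: V.Emat_apply V.crd_basis[OF i i])
qed

text \<open>Compressing the matrix units of \<open>E'\<close> by the idempotent shows that its image is a line.\<close>

lemma idem_rank_one:
  assumes i: "i \<in> {1..n}"
  shows "\<exists>y. y \<noteq> 0 \<and> idem i y = y \<and> (\<forall>x. \<exists>l. idem i x = s' l y)"
proof -
  have "\<forall>t\<in>{1..n}. \<exists>\<kappa>. idem i \<circ> Emat s' v' n t t \<circ> idem i = (\<lambda>x. s' \<kappa> (idem i x))"
    using idem_corner[OF i] V'.Emat_in_pattern_endos[OF preorder_refl[OF preorder] preorder] by blast
  then obtain \<kappa> where \<kappa>: "\<And>t. t \<in> {1..n} \<Longrightarrow> idem i \<circ> Emat s' v' n t t \<circ> idem i = (\<lambda>x. s' (\<kappa> t) (idem i x))"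
    by metis
  have k1: "idem i (s' (V'.crd (idem i x) t) (v' t)) = s' (\<kappa> t) (idem i x)" if t: "t \<in> {1..n}" for t x
    using fun_cong[OF \<kappa>[OF t], of x] idem_comp[OF i i] by (simp add: V'.Emat_apply)
  have "\<exists>t\<in>{1..n}. \<kappa> t \<noteq> 0"
  proof (rule ccontr)
    assume "\<not> ?thesis"
    hence "idem i x = 0" for x
      using V'.lin_map_sum[OF linear_idem[OF i], of "\<lambda>t. s' (V'.crd (idem i x) t) (v' t)" "{1..n}"]
        V'.basis_expansion[of "idem i x"] idem_comp[OF i i] k1 by simp
    thus False using idem_nonzero[OF i] by blast
  qed
  then obtain t where t: "t \<in> {1..n}" "\<kappa> t \<noteq> 0" by blast
  define y where "y = idem i (v' t)"
  have fx: "idem i x = s' (inverse (\<kappa> t) * V'.crd (idem i x) t) y" for x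
  proof -
    have "s' (\<kappa> t) (idem i x) = s' (V'.crd (idem i x) t) y"
      using k1[OF t(1)] V'.lin_map_scale[OF linear_idem[OF i]] by (simp add: y_def)
    hence "s' (inverse (\<kappa> t)) (s' (\<kappa> t) (idem i x)) = s' (inverse (\<kappa> t)) (s' (V'.crd (idem i x) t) y)"
      by simp
    thus ?thesis using t(2) by simp
  qed
  have "y \<noteq> 0"
  proof
    assume "y = 0"
    hence "idem i x = 0" for x using fx[of x] by simp
    thus False using idem_nonzero[OF i] by blast
  qed
  moreover have "idem i y = y" using idem_comp[OF i i] by (simp add: y_def)
  ultimately show ?thesis using fx by blast
qed

lemma idem_basis_exists:
  "\<exists>u. indexed_basis s' u n \<and> (\<forall>i\<in>{1..n}. \<forall>x. idem i x = s' (coord s' u n x i) (u i))"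
proof -
  obtain u where u: "\<And>i. i \<in> {1..n} \<Longrightarrow> u i \<noteq> 0 \<and> idem i (u i) = u i \<and> (\<forall>x. \<exists>l. idem i x = s' l (u i))"
    using idem_rank_one by metis
  have idem_u: "idem i (u j) = (if i = j then u j else 0)" if i: "i \<in> {1..n}" and j: "j \<in> {1..n}" for i j
    using idem_comp[OF i j, of "u j"] u[OF j] by (auto split: if_splits)
  have idem_lincomb: "idem k (\<Sum>j=1..n. s' (c j) (u j)) = s' (c k) (u k)" if k: "k \<in> {1..n}" for c k
  proof -
    have "idem k (\<Sum>j=1..n. s' (c j) (u j)) = (\<Sum>j=1..n. s' (c j) (idem k (u j)))"
      by (simp add: V'.lin_map_sum[OF linear_idem[OF k]] V'.lin_map_scale[OF linear_idem[OF k]])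
    also have "\<dots> = (\<Sum>j=1..n. if j = k then s' (c k) (u k) else 0)"
      by (rule sum.cong) (auto simp: idem_u[OF k])
    finally show ?thesis using k by simp
  qed
  have "inj_on u {1..n} \<and> V'.independent (u ` {1..n})"
  proof (rule V'.independent_if_lincomb_zero)
    fix c assume "(\<Sum>j=1..n. s' (c j) (u j)) = 0"
    thus "\<forall>j\<in>{1..n}. c j = 0"
      using idem_lincomb V'.lin_map_zero[OF linear_idem] u by (metis V'.scale_eq_0_iff)
  qed
  moreover have "V'.span (u ` {1..n}) = UNIV"
  proof -
    have "(\<Sum>i=1..n. idem i x) \<in> V'.span (u ` {1..n})" for x
    proof (rule V'.span_sum)
      fix i assume i: "i \<in> {1..n}"
      obtain l where "idem i x = s' l (u i)" using u[OF i] by blast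
      thus "idem i x \<in> V'.span (u ` {1..n})" using i by (simp add: V'.span_scale V'.span_base)
    qed
    thus ?thesis using sum_idem by auto
  qed
  ultimately have U: "indexed_basis s' u n"
    by unfold_locales auto
  have "idem i x = s' (coord s' u n x i) (u i)" if i: "i \<in> {1..n}" for i x
    using idem_lincomb[OF i] indexed_basis.basis_expansion[OF U, of x] by metis
  thus ?thesis using U by blast
qed

end

locale pattern_alg_iso_basis = pattern_alg_iso + U: indexed_basis s' u n for u +
  assumes idem_eq: "i \<in> {1..n} \<Longrightarrow> idem i x = s' (coord s' u n x i) (u i)"
begin

definition iso_scalar where
  "iso_scalar i j = coord s' u n (\<phi> (Emat s v n i j) (u j)) i"

lemma Emat_in: "(i, j) \<in> \<rho> \<Longrightarrow> Emat s v n i j \<in> E"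
  by (rule V.Emat_in_pattern_endos[OF _ preorder])

text \<open>Since \<open>E\<^sub>i\<^sub>j = E\<^sub>i\<^sub>i E\<^sub>i\<^sub>j E\<^sub>j\<^sub>j\<close>, its image maps \<open>u\<^sub>j\<close> into the line through \<open>u\<^sub>i\<close> and kills the other \<open>u\<^sub>r\<close>.\<close>

lemma phi_Emat:
  assumes ij: "(i, j) \<in> \<rho>"
  shows "\<phi> (Emat s v n i j) = (\<lambda>x. s' (iso_scalar i j * coord s' u n x j) (u i))"
proof
  fix x
  have i: "i \<in> {1..n}" and j: "j \<in> {1..n}" using preorder_dom[OF preorder ij] by auto
  have lE: "V'.lin (\<phi> (Emat s v n i j))" by (rule V'.pattern_endos_linear[OF phi_in[OF Emat_in[OF ij]]])
  have "Emat s v n i j = Emat s v n i i \<circ> (Emat s v n i j \<circ> Emat s v n j j)"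
    using V.Emat_comp[OF i j j j] V.Emat_comp[OF i i i j] by simp
  hence "\<phi> (Emat s v n i j) = idem i \<circ> (\<phi> (Emat s v n i j) \<circ> idem j)"
    unfolding idem_def
    using phi_comp[OF Emat_diag_in[OF i] V.comp_in_pattern_endos[OF preorder Emat_in[OF ij] Emat_diag_in[OF j]]]
      phi_comp[OF Emat_in[OF ij] Emat_diag_in[OF j]]
    by simp
  hence "\<phi> (Emat s v n i j) x = idem i (\<phi> (Emat s v n i j) (idem j x))" by (metis comp_apply)
  also have "\<dots> = s' (iso_scalar i j * coord s' u n x j) (u i)"
    unfolding idem_eq[OF j] V'.lin_map_scale[OF lE] V'.lin_map_scale[OF linear_idem[OF i]] idem_eq[OF i]
      iso_scalar_def
    by (simp add: U.crd_scale mult.commute)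
  finally show "\<phi> (Emat s v n i j) x = s' (iso_scalar i j * coord s' u n x j) (u i)" .
qed

lemma iso_scalar_nonzero:
  assumes ij: "(i, j) \<in> \<rho>"
  shows "iso_scalar i j \<noteq> 0"
proof
  assume "iso_scalar i j = 0"
  hence "\<phi> (Emat s v n i j) = \<phi> (\<lambda>x. 0)" using phi_Emat[OF ij] phi_zero by simp
  hence "Emat s v n i j (v j) = 0" using phi_inj[OF Emat_in[OF ij] V.zero_in_pattern_endos] by simp
  moreover have i: "i \<in> {1..n}" and j: "j \<in> {1..n}" using preorder_dom[OF preorder ij] by auto
  ultimately have "v i = 0" by (simp add: V.Emat_apply V.crd_basis[OF j j])
  thus False using V.basis_nonzero[OF i] by simp
qed

lemma iso_scalar_cocycle:
  assumes ij: "(i, j) \<in> \<rho>" and jr: "(j, r) \<in> \<rho>"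
  shows "iso_scalar i j * iso_scalar j r = iso_scalar i r"
proof -
  have i: "i \<in> {1..n}" and j: "j \<in> {1..n}" and r: "r \<in> {1..n}"
    using preorder_dom[OF preorder ij] preorder_dom[OF preorder jr] by auto
  have ir: "(i, r) \<in> \<rho>" by (rule preorder_trans[OF preorder ij jr])
  have "\<phi> (Emat s v n i j) \<circ> \<phi> (Emat s v n j r) = \<phi> (Emat s v n i r)"
    using phi_comp[OF Emat_in[OF ij] Emat_in[OF jr]] V.Emat_comp[OF i j j r] by simp
  hence "\<phi> (Emat s v n i j) (\<phi> (Emat s v n j r) (u r)) = \<phi> (Emat s v n i r) (u r)" by (metis comp_apply)
  hence "s' (iso_scalar i j * iso_scalar j r) (u i) = s' (iso_scalar i r) (u i)"
    unfolding phi_Emat[OF ij] phi_Emat[OF jr] phi_Emat[OF ir]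
    by (simp add: U.crd_scale U.crd_basis[OF r r] U.crd_basis[OF j j])
  thus ?thesis using U.basis_nonzero[OF i] by simp
qed

lemma iso_scalar_Tfam: "(\<lambda>i j. if (i, j) \<in> \<rho> then iso_scalar i j else 1) \<in> Tfam \<rho>"
  unfolding Tfam_def
proof (intro CollectI conjI ballI allI impI)
  fix p assume "p \<in> \<rho>"
  thus "case p of (i, j) \<Rightarrow> (if (i, j) \<in> \<rho> then iso_scalar i j else 1) \<noteq> 0"
    using iso_scalar_nonzero by auto
next
  fix i j r assume ij: "(i, j) \<in> \<rho>" and jr: "(j, r) \<in> \<rho>"
  thus "(if (i, j) \<in> \<rho> then iso_scalar i j else 1) * (if (j, r) \<in> \<rho> then iso_scalar j r else 1)
      = (if (i, r) \<in> \<rho> then iso_scalar i r else 1)"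
    using iso_scalar_cocycle[OF ij jr] preorder_trans[OF preorder ij jr] by simp
qed

lemma Emat_u_in: "(i, j) \<in> \<rho> \<Longrightarrow> Emat s' u n i j \<in> E'"
proof -
  assume ij: "(i, j) \<in> \<rho>"
  have "Emat s' u n i j = (\<lambda>x. s' (inverse (iso_scalar i j)) (\<phi> (Emat s v n i j) x))"
    unfolding phi_Emat[OF ij] U.Emat_apply using iso_scalar_nonzero[OF ij] by (simp add: mult.assoc[symmetric])
  thus ?thesis using V'.scale_in_pattern_endos[OF phi_in[OF Emat_in[OF ij]]] by simp
qed

lemma mat_u_entry:
  assumes h: "h \<in> E'" and i: "i \<in> {1..n}" and j: "j \<in> {1..n}" and ij: "(i, j) \<notin> \<rho>"
  shows "mat_of s' u n h i j = 0"
proof -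
  obtain F where F: "F \<in> E" "h = \<phi> F" using phi_surj[OF h] by blast
  have lF: "V.lin F" using F(1) by (rule V.pattern_endos_linear)
  have "Emat s v n i i \<circ> (F \<circ> Emat s v n j j) = (\<lambda>x. s (V.crd x j * mat_of s v n F i j) (v i))"
    by (auto simp: V.Emat_apply V.lin_map_scale[OF lF] V.crd_scale mat_of_def)
  also have "\<dots> = (\<lambda>x. 0)" using V.pattern_endos_entry[OF F(1) i j ij] by simp
  finally have "idem i \<circ> (h \<circ> idem j) = (\<lambda>x. 0)"
    unfolding F(2) idem_def
      phi_comp[OF Emat_diag_in[OF i] V.comp_in_pattern_endos[OF preorder F(1) Emat_diag_in[OF j]], symmetric]
      phi_comp[OF F(1) Emat_diag_in[OF j], symmetric]
    by (simp add: phi_zero)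
  hence "idem i (h (idem j (u j))) = 0" by (metis comp_apply)
  hence "s' (U.crd (h (u j)) i) (u i) = 0" using idem_eq[OF i] idem_eq[OF j] U.crd_basis[OF j j] by simp
  thus ?thesis using U.basis_nonzero[OF i] by (simp add: mat_of_def)
qed

lemma compatible_bases: "compatible_bases s' v' u n \<rho>"
  by (intro compatible_bases.intro V'.indexed_basis_axioms U.indexed_basis_axioms compatible_bases_axioms.intro
      preorder Emat_u_in mat_u_entry)

lemma phi_eq_Fmat:
  "\<exists>A\<in>units_rho \<rho> n. \<exists>g\<in>Aut0 \<rho> n. \<exists>a\<in>Tfam \<rho>. \<forall>(i, j)\<in>\<rho>. \<phi> (Emat s v n i j) = Fmat s' v' n \<rho> A g a i j"
proof -
  obtain g where g: "g \<in> Aut0 \<rho> n"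
    and lower: "\<And>i j. i \<in> {1..n} \<Longrightarrow> j \<in> {1..n} \<Longrightarrow> coord s' v' n (u j) i \<noteq> 0 \<Longrightarrow> (i, tilde \<rho> g j) \<in> \<rho>"
    and upper: "\<And>i j. i \<in> {1..n} \<Longrightarrow> j \<in> {1..n} \<Longrightarrow> coord s' u n (v' i) j \<noteq> 0 \<Longrightarrow> (tilde \<rho> g j, i) \<in> \<rho>"
    using compatible_bases.Aut0_bounds_transition[OF compatible_bases] by blast
  let ?\<sigma> = "tilde \<rho> g"
  define A where "A i t = (if i \<in> {1..n} \<and> t \<in> {1..n} then coord s' v' n (u (inv_into {1..n} ?\<sigma> t)) i else 0)"
    for i t
  have \<sigma>: "bij_betw ?\<sigma> {1..n} {1..n}" by (rule tilde_bij[OF preorder g])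
  have A: "A \<in> units_rho \<rho> n"
    unfolding A_def by (rule transition_matrix_unit[OF V'.indexed_basis_axioms U.indexed_basis_axioms \<sigma> lower upper])
  have twist_u: "wvec s' v' n (mat_twist \<rho> g A) j = u j" if j: "j \<in> {1..n}" for j
  proof -
    have "inv_into {1..n} ?\<sigma> (?\<sigma> j) = j" using \<sigma> j by (simp add: bij_betw_def inv_into_f_f)
    hence "wvec s' v' n (mat_twist \<rho> g A) j = (\<Sum>i=1..n. s' (coord s' v' n (u j) i) (v' i))"
      unfolding wvec_def mat_twist_def A_def using tilde_range[OF preorder g j] by (intro sum.cong) auto
    thus ?thesis using V'.basis_expansion[of "u j"] by simp
  qed
  have "wvec s' v' n (mat_twist \<rho> g A) ` {1..n} = u ` {1..n}" by (rule image_cong[OF refl twist_u])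
  hence coord_twist: "coord s' (wvec s' v' n (mat_twist \<rho> g A)) n x j = coord s' u n x j"
    if "j \<in> {1..n}" for x j
    unfolding coord_def twist_u[OF that] by simp
  have "\<phi> (Emat s v n i j) = Fmat s' v' n \<rho> A g (\<lambda>i j. if (i, j) \<in> \<rho> then iso_scalar i j else 1) i j"
    if ij: "(i, j) \<in> \<rho>" for i j
    using phi_Emat[OF ij] ij twist_u coord_twist preorder_dom[OF preorder ij] unfolding Fmat_def Let_def by simp
  thus ?thesis using A g iso_scalar_Tfam by blast
qed

end

lemma (in pattern_alg_iso) alg_iso_is_Fmat:
  "\<exists>A\<in>units_rho \<rho> n. \<exists>g\<in>Aut0 \<rho> n. \<exists>a\<in>Tfam \<rho>. \<forall>(i, j)\<in>\<rho>. \<phi> (Emat s v n i j) = Fmat s' v' n \<rho> A g a i j"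
proof -
  obtain u where "indexed_basis s' u n" "\<forall>i\<in>{1..n}. \<forall>x. idem i x = s' (coord s' u n x i) (u i)"
    using idem_basis_exists by blast
  then interpret pattern_alg_iso_basis s v s' v' n \<rho> \<phi> u
    by (intro pattern_alg_iso_basis.intro pattern_alg_iso_axioms pattern_alg_iso_basis_axioms.intro) auto
  show ?thesis by (rule phi_eq_Fmat)
qed

lemma indexed_basis_if_adapted: "vector_space s \<Longrightarrow> adapted_basis s \<rho> n Vf v \<Longrightarrow> indexed_basis s v n"
  unfolding adapted_basis_def indexed_basis_def indexed_basis_axioms_def by blast

theorem proposition4p2:
  fixes s :: "'k::field \<Rightarrow> 'v::ab_group_add \<Rightarrow> 'v"
    and s' :: "'k \<Rightarrow> 'w::ab_group_add \<Rightarrow> 'w"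
    and \<rho> :: "(nat \<times> nat) set" and n :: nat
    and Vf :: "nat set \<Rightarrow> 'v set" and Vf' :: "nat set \<Rightarrow> 'w set"
    and v :: "nat \<Rightarrow> 'v" and v' :: "nat \<Rightarrow> 'w"
  assumes "vector_space s" and "vector_space s'"
    and "n \<ge> 1" and "preorder_on {1..n} \<rho>"
    and "adapted_basis s \<rho> n Vf v" and "adapted_basis s' \<rho> n Vf' v'"
  shows "(\<forall>A \<in> units_rho \<rho> n. \<forall>g \<in> Aut0 \<rho> n. \<forall>a \<in> Tfam \<rho>.
            \<exists>\<phi>. alg_iso s s' (End_flag s \<rho> n Vf) (End_flag s' \<rho> n Vf') \<phi>
               \<and> (\<forall>(i, j) \<in> \<rho>. \<phi> (Emat s v n i j) = Fmat s' v' n \<rho> A g a i j))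
       \<and> (\<forall>\<phi>. alg_iso s s' (End_flag s \<rho> n Vf) (End_flag s' \<rho> n Vf') \<phi> \<longrightarrow>
            (\<exists>A \<in> units_rho \<rho> n. \<exists>g \<in> Aut0 \<rho> n. \<exists>a \<in> Tfam \<rho>.
               \<forall>(i, j) \<in> \<rho>. \<phi> (Emat s v n i j) = Fmat s' v' n \<rho> A g a i j))"
proof -
  note P = assms(4)
  have V: "indexed_basis s v n" by (rule indexed_basis_if_adapted[OF assms(1) assms(5)])
  have V': "indexed_basis s' v' n" by (rule indexed_basis_if_adapted[OF assms(2) assms(6)])
  have E: "End_flag s \<rho> n Vf = pattern_endos s \<rho> v n" by (rule End_flag_eq_pattern_endos[OF V P assms(5)])
  have E': "End_flag s' \<rho> n Vf' = pattern_endos s' \<rho> v' n" by (rule End_flag_eq_pattern_endos[OF V' P assms(6)])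
  show ?thesis
    unfolding E E'
  proof (intro conjI ballI allI impI)
    fix A a :: "nat \<Rightarrow> nat \<Rightarrow> 'k" and g
    assume "A \<in> units_rho \<rho> n" "g \<in> Aut0 \<rho> n" "a \<in> Tfam \<rho>"
    thus "\<exists>\<phi>. alg_iso s s' (pattern_endos s \<rho> v n) (pattern_endos s' \<rho> v' n) \<phi>
            \<and> (\<forall>(i, j) \<in> \<rho>. \<phi> (Emat s v n i j) = Fmat s' v' n \<rho> A g a i j)"
      by (rule alg_iso_Fmat[OF V V' P])
  next
    fix \<phi> assume "alg_iso s s' (pattern_endos s \<rho> v n) (pattern_endos s' \<rho> v' n) \<phi>"
    then interpret pattern_alg_iso s v s' v' n \<rho> \<phi>
      using V V' P by (intro pattern_alg_iso.intro pattern_alg_iso_axioms.intro)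
    show "\<exists>A\<in>units_rho \<rho> n. \<exists>g\<in>Aut0 \<rho> n. \<exists>a\<in>Tfam \<rho>.
            \<forall>(i, j)\<in>\<rho>. \<phi> (Emat s v n i j) = Fmat s' v' n \<rho> A g a i j"
      by (rule alg_iso_is_Fmat)
  qed
qed

end
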